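(* A strong CCTRS $\mathcal R$ is quasi-decreasing (i.e., every term in $\mathcal T(\mathcal F,\mathcal V)$ is quasi-decreasing) if and only if the context-sensitive TRS $(\Xi(\mathcal R),\mu)$ is terminating on all terms in the set $\{\zeta(s)\mid s\in\mathcal T(\mathcal G,\mathcal V)\}$.
   Context: A CCTRS over $\mathcal F$ is a set $\mathcal R$ of conditional rules each of the form $f(\ell_1,\dots,\ell_n)\to r\Leftarrow a_1\approx b_1,\dots,a_k\approx b_k$ (defined symbols are roots of left-hand sides, others constructors; constructor terms contain only constructors and variables) where $\ell_1,\dots,\ell_n,b_1,\dots,b_k$ are constructor terms, the terms $f(\ell_1,\dots,\ell_n),b_1,\dots,b_k$ pairwise share no variables, $\mathrm{Var}(r)\subseteq\mathrm{Var}(\ell_1,\dots,\ell_n,b_1,\dots,b_k)$, and $\mathrm{Var}(a_i)\subseteq\mathrm{Var}(\ell_1,\dots,\ell_n,b_1,\dots,b_{i-1})$. The rewrite relation: $s\to_{\mathcal R}t$ iff there are a position $p$, a rule and $\sigma$ with $s|_p=\ell\sigma$, $t=s[r\sigma]_p$ and $a_j\sigma\to^*_{\mathcal R}b_j\sigma$ for all $j$ (formally the union of the standard approximations). $\mathcal R{\restriction}f$ is the set of rules with left-hand root $f$. A strong CCTRS is a CCTRS with each $\mathcal R{\restriction}f$ finite and each $f(\ell_1,\dots,\ell_n)$ and $b_j$ linear. Let $m_f=|\mathcal R{\restriction}f|$ (0 for constructors), with fixed enumeration $\rho^f_1,\dots,\rho^f_{m_f}$. Write $s\sqsupset t$ if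 there are a position $p$, a rule, $\sigma$ and $1\le i\le k$ with $s|_p=\ell\sigma$, $a_j\sigma\to^*b_j\sigma$ for $j<i$ and $t=a_i\sigma$; a term $s$ is quasi-decreasing if there is no infinite sequence $s=u_0\,(\to\cup\sqsupset)\,u_1\,(\to\cup\sqsupset)\cdots$. $\mathcal G$ is the labeled signature: constructors of $\mathcal F$ plus symbols $f_R$ (same arity as $f$) for each defined $f$ and $R\subseteq\mathcal R{\restriction}f$. The transformed system: signature $\mathcal H$ with constants $\bot,\top$ ($\mu=\emptyset$); every $f\in\mathcal F$ of arity $n$ as a symbol of arity $n+m_f$ with $\mu(f)=\{1,\dots,n\}$; and for every defined $f$ of arity $n$, every $\rho^f_i$ with $k>0$ conditions and $1\le j\le k$ a symbol $f_i^j$ of arity $n+m_f+j-1$ with $\mu(f_i^j)=\{n+i+j-1\}$. A position is active in $t$ if it is $\epsilon$ or $iq$ with $i\in\mu(\mathrm{root}(t))$ and $q$ active in $t|_i$; $\to_{\Xi(\mathcal R),\mu}$ rewrites only at active positions. $\xi_\star$ ($\star\in\{\bot,\top\}$): identity on variables, homomorphic on constructors, $f(t_1..t_n)\mapsto f(\xi_\star(t_1),\dots,\xi_\star(t_n),\star,\dots,\star)$ ($m_f$ copies) for defined $f$. For a linear constructor term $t$: $\mathrm{AP}(x)=\emptyset$, and $\mathrm{AP}(f(t_1,\dots,t_n))$ consists of $g(x_1,\dots,x_m)$ for every constructor $g\neq f$ of arity $m$, $g(x_1,\dots,x_m,\bot,\dots,\bot)$ for every defined $g$ of arity $m$, and $f(x_1,\dots,x_{i-1},u,x_{i+1},\dots,x_n)$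 for $u\in\mathrm{AP}(t_i)$ (fresh distinct $x$'s). Notation: $\langle t_1,\dots,t_n\rangle[u_1,\dots,u_j]_i$ is $t_1,\dots,t_{i-1},u_1,\dots,u_j,t_{i+1},\dots,t_n$. For the $i$-th rule $\rho_i\colon f(\vec\ell)\to r\Leftarrow a_1\approx b_1,\dots,a_k\approx b_k$ of $\mathcal R{\restriction}f$ and fresh distinct $x_1,\dots,x_{m_f},y_1,\dots,y_n$, $\Xi(\mathcal R)$ contains: $(1)$ if $k=0$: $f(\vec\ell,\langle\vec x\rangle[\top]_i)\to\xi_\top(r)$; if $k>0$: $(2)$ $f(\vec\ell,\langle\vec x\rangle[\top]_i)\to f_i^1(\vec\ell,\langle\vec x\rangle[\xi_\top(a_1)]_i)$, $(3)$ $f_i^k(\vec\ell,\langle\vec x\rangle[b_1,\dots,b_k]_i)\to\xi_\top(r)$, $(4)$ for $1\le j<k$: $f_i^j(\vec\ell,\langle\vec x\rangle[b_1,\dots,b_j]_i)\to f_i^{j+1}(\vec\ell,\langle\vec x\rangle[b_1,\dots,b_j,\xi_\top(a_{j+1})]_i)$, $(5)$ for $1\le j\le k$ and $v\in\mathrm{AP}(b_j)$ (fresh variables): $f_i^j(\vec\ell,\langle\vec x\rangle[b_1,\dots,b_{j-1},v]_i)\to f(\vec\ell,\langle\vec x\rangle[\bot]_i)$; and for any $k$: $(6)$ for $1\le j\le n$ and $v\in\mathrm{AP}(\ell_j)$ (fresh variables): $f(\langle\vec y\rangle[v]_j,\langle\vec x\rangle[\top]_i)\to f(\langle\vec y\rangle[v]_j,\langle\vec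 x\rangle[\bot]_i)$. The map $\zeta\colon\mathcal T(\mathcal G,\mathcal V)\to\mathcal T(\mathcal H,\mathcal V)$: identity on variables, homomorphic on constructors, $\zeta(f_R(t_1,\dots,t_n))=f(\zeta(t_1),\dots,\zeta(t_n),c_1,\dots,c_{m_f})$ with $c_i=\top$ iff $\rho^f_i\in R$, else $\bot$. *)

theory Defs
  imports Main
begin

datatype ('f, 'v) "term" = Var 'v | Fun 'f "('f, 'v) term list"

fun vars_list :: "('f, 'v) term \<Rightarrow> 'v list" where
  "vars_list (Var x) = [x]"
| "vars_list (Fun f ts) = concat (map vars_list ts)"

definition vars :: "('f, 'v) term \<Rightarrow> 'v set" where
  "vars t = set (vars_list t)"

definition linear :: "('f, 'v) term \<Rightarrow> bool" where
  "linear t \<longleftrightarrow> distinct (vars_list t)"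

fun funs :: "('f, 'v) term \<Rightarrow> 'f set" where
  "funs (Var x) = {}"
| "funs (Fun f ts) = insert f (\<Union>t \<in> set ts. funs t)"

fun root :: "('f, 'v) term \<Rightarrow> 'f option" where
  "root (Var x) = None"
| "root (Fun f ts) = Some f"

fun wf_term :: "('f \<Rightarrow> nat) \<Rightarrow> ('f, 'v) term \<Rightarrow> bool" where
  "wf_term ar (Var x) = True"
| "wf_term ar (Fun f ts) = (length ts = ar f \<and> (\<forall>t \<in> set ts. wf_term ar t))"

fun subst :: "('v \<Rightarrow> ('f, 'v) term) \<Rightarrow> ('f, 'v) term \<Rightarrow> ('f, 'v) term" where
  "subst \<sigma> (Var x) = \<sigma> x"
| "subst \<sigma> (Fun f ts) = Fun f (map (subst \<sigma>) ts)"

datatype ('f, 'v) ctxt = Hole | More 'f "('f, 'v) term list" "('f, 'v) ctxt" "('f, 'v) term list"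

fun plug :: "('f, 'v) ctxt \<Rightarrow> ('f, 'v) term \<Rightarrow> ('f, 'v) term" where
  "plug Hole t = t"
| "plug (More f ss C ts) t = Fun f (ss @ plug C t # ts)"

text \<open>A context whose hole is at an active position w.r.t. a replacement map mu
  (argument positions are numbered from 1).\<close>
fun active_ctxt :: "('f \<Rightarrow> nat set) \<Rightarrow> ('f, 'v) ctxt \<Rightarrow> bool" where
  "active_ctxt \<mu> Hole = True"
| "active_ctxt \<mu> (More f ss C ts) = (Suc (length ss) \<in> \<mu> f \<and> active_ctxt \<mu> C)"

section \<open>Conditional constructor TRSs\<close>

text \<open>A conditional rule f(l1..ln) -> r <= a1 ~ b1, ..., ak ~ bk is represented as
  (lhs, rhs, [(a1,b1),...,(ak,bk)]).\<close>
type_synonym ('f, 'v) crule = "('f, 'v) term \<times> ('f, 'v) term \<times> (('f, 'v) term \<times> ('f, 'v) term) list"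

definition defined :: "('f, 'v) crule set \<Rightarrow> 'f \<Rightarrow> bool" where
  "defined R f \<longleftrightarrow> (\<exists>\<rho> \<in> R. root (fst \<rho>) = Some f)"

definition rules_of :: "('f, 'v) crule set \<Rightarrow> 'f \<Rightarrow> ('f, 'v) crule set" where
  "rules_of R f = {\<rho> \<in> R. root (fst \<rho>) = Some f}"

definition constr_term :: "('f, 'v) crule set \<Rightarrow> ('f, 'v) term \<Rightarrow> bool" where
  "constr_term R t \<longleftrightarrow> (\<forall>g \<in> funs t. \<not> defined R g)"

definition pairwise_var_disjoint :: "('f, 'v) term list \<Rightarrow> bool" where
  "pairwise_var_disjoint ts \<longleftrightarrow>
     (\<forall>i j. i < length ts \<and> j < length ts \<and> i \<noteq> j \<longrightarrow> vars (ts ! i) \<inter> vars (ts ! j) = {})"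

definition cctrs :: "('f \<Rightarrow> nat) \<Rightarrow> ('f, 'v) crule set \<Rightarrow> bool" where
  "cctrs ar R \<longleftrightarrow> (\<forall>\<rho> \<in> R. \<exists>f ls r cs. \<rho> = (Fun f ls, r, cs) \<and>
      wf_term ar (Fun f ls) \<and> wf_term ar r \<and>
      (\<forall>(a, b) \<in> set cs. wf_term ar a \<and> wf_term ar b) \<and>
      (\<forall>l \<in> set ls. constr_term R l) \<and>
      (\<forall>(a, b) \<in> set cs. constr_term R b) \<and>
      pairwise_var_disjoint (Fun f ls # map snd cs) \<and>
      vars r \<subseteq> vars (Fun f ls) \<union> (\<Union>b \<in> set (map snd cs). vars b) \<and>
      (\<forall>i < length cs. vars (fst (cs ! i)) \<subseteq>
          vars (Fun f ls) \<union> (\<Union>b \<in> set (take i (map snd cs)). vars b)))"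

definition strong_cctrs :: "('f \<Rightarrow> nat) \<Rightarrow> ('f, 'v) crule set \<Rightarrow> bool" where
  "strong_cctrs ar R \<longleftrightarrow> cctrs ar R \<and> (\<forall>f. finite (rules_of R f)) \<and>
     (\<forall>\<rho> \<in> R. linear (fst \<rho>) \<and> (\<forall>(a, b) \<in> set (snd (snd \<rho>)). linear b))"

text \<open>The rewrite relation of a CCTRS (least fixed point = union of the approximations).\<close>
inductive rstep :: "('f, 'v) crule set \<Rightarrow> ('f, 'v) term \<Rightarrow> ('f, 'v) term \<Rightarrow> bool"
  for R where
  "(l, r, cs) \<in> R \<Longrightarrow>
   (\<forall>j < length cs. (rstep R)\<^sup>*\<^sup>* (subst \<sigma> (fst (cs ! j))) (subst \<sigma> (snd (cs ! j)))) \<Longrightarrow>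
   rstep R (plug C (subst \<sigma> l)) (plug C (subst \<sigma> r))"

definition sqsup :: "('f, 'v) crule set \<Rightarrow> ('f, 'v) term \<Rightarrow> ('f, 'v) term \<Rightarrow> bool" where
  "sqsup R s t \<longleftrightarrow> (\<exists>C l r cs \<sigma> i. (l, r, cs) \<in> R \<and> i < length cs \<and>
      s = plug C (subst \<sigma> l) \<and>
      (\<forall>j < i. (rstep R)\<^sup>*\<^sup>* (subst \<sigma> (fst (cs ! j))) (subst \<sigma> (snd (cs ! j)))) \<and>
      t = subst \<sigma> (fst (cs ! i)))"

definition quasi_decreasing_term :: "('f, 'v) crule set \<Rightarrow> ('f, 'v) term \<Rightarrow> bool" where
  "quasi_decreasing_term R s \<longleftrightarrow>
     \<not> (\<exists>u. u 0 = s \<and> (\<forall>i. rstep R (u i) (u (Suc i)) \<or> sqsup R (u i) (u (Suc i))))"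

definition quasi_decreasing :: "('f \<Rightarrow> nat) \<Rightarrow> ('f, 'v) crule set \<Rightarrow> bool" where
  "quasi_decreasing ar R \<longleftrightarrow> (\<forall>s. wf_term ar s \<longrightarrow> quasi_decreasing_term R s)"

definition enumeration :: "('f, 'v) crule set \<Rightarrow> ('f \<Rightarrow> ('f, 'v) crule list) \<Rightarrow> bool" where
  "enumeration R enum \<longleftrightarrow> (\<forall>f. distinct (enum f) \<and> set (enum f) = rules_of R f)"

section \<open>The labeled signature G\<close>

text \<open>GCon c: a constructor of F; GLab f S: the labeled symbol f_S.\<close>
datatype ('f, 'v) gsym = GCon 'f | GLab 'f "('f, 'v) crule set"

fun wf_gterm :: "('f \<Rightarrow> nat) \<Rightarrow> ('f, 'v) crule set \<Rightarrow> (('f, 'v) gsym, 'v) term \<Rightarrow> bool" where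
  "wf_gterm ar R (Var x) = True"
| "wf_gterm ar R (Fun (GCon c) ts) = (\<not> defined R c \<and> length ts = ar c \<and> (\<forall>t \<in> set ts. wf_gterm ar R t))"
| "wf_gterm ar R (Fun (GLab f S) ts) = (defined R f \<and> S \<subseteq> rules_of R f \<and>
      length ts = ar f \<and> (\<forall>t \<in> set ts. wf_gterm ar R t))"

section \<open>The transformed signature H and the system Xi(R)\<close>

text \<open>Bot, Top; Orig f: f with arity n + m_f; Aux f i j: the symbol f_i^j (i, j counted from 1).\<close>
datatype 'f hsym = Bot | Top | Orig 'f | Aux 'f nat nat

definition mcount :: "('f \<Rightarrow> ('f, 'v) crule list) \<Rightarrow> 'f \<Rightarrow> nat" where
  "mcount enum f = length (enum f)"

definition ar_H :: "('f \<Rightarrow> nat) \<Rightarrow> ('f \<Rightarrow> ('f, 'v) crule list) \<Rightarrow> 'f hsym \<Rightarrow> nat" where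
  "ar_H ar enum g = (case g of Bot \<Rightarrow> 0 | Top \<Rightarrow> 0
      | Orig f \<Rightarrow> ar f + mcount enum f
      | Aux f i j \<Rightarrow> ar f + mcount enum f + j - 1)"

definition mu_H :: "('f \<Rightarrow> nat) \<Rightarrow> 'f hsym \<Rightarrow> nat set" where
  "mu_H ar g = (case g of Bot \<Rightarrow> {} | Top \<Rightarrow> {}
      | Orig f \<Rightarrow> {1 .. ar f}
      | Aux f i j \<Rightarrow> {ar f + i + j - 1})"

abbreviation hconst :: "'f hsym \<Rightarrow> ('f hsym, 'v) term" where
  "hconst c \<equiv> Fun c []"

text \<open>xi_star; constructors have m_f = 0, so no extra arguments are added for them.\<close>
fun xi :: "('f \<Rightarrow> ('f, 'v) crule list) \<Rightarrow> 'f hsym \<Rightarrow> ('f, 'v) term \<Rightarrow> ('f hsym, 'v) term" where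
  "xi enum st (Var x) = Var x"
| "xi enum st (Fun f ts) = Fun (Orig f) (map (xi enum st) ts @ replicate (mcount enum f) (hconst st))"

fun emb :: "('f, 'v) term \<Rightarrow> ('f hsym, 'v) term" where
  "emb (Var x) = Var x"
| "emb (Fun f ts) = Fun (Orig f) (map emb ts)"

text \<open>AP(t) up to the choice of variables; linearity and freshness are imposed where used.\<close>
inductive ap :: "('f \<Rightarrow> nat) \<Rightarrow> ('f, 'v) crule set \<Rightarrow> ('f \<Rightarrow> ('f, 'v) crule list) \<Rightarrow>
    ('f, 'v) term \<Rightarrow> ('f hsym, 'v) term \<Rightarrow> bool"
  for ar R enum where
  ap_constr: "g \<noteq> f \<Longrightarrow> \<not> defined R g \<Longrightarrow> length xs = ar g \<Longrightarrow>
     ap ar R enum (Fun f ts) (Fun (Orig g) (map Var xs))"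
| ap_defined: "defined R g \<Longrightarrow> length xs = ar g \<Longrightarrow>
     ap ar R enum (Fun f ts) (Fun (Orig g) (map Var xs @ replicate (mcount enum g) (hconst Bot)))"
| ap_arg: "i < length ts \<Longrightarrow> ap ar R enum (ts ! i) u \<Longrightarrow> length xs1 = i \<Longrightarrow>
     length xs1 + 1 + length xs2 = length ts \<Longrightarrow>
     ap ar R enum (Fun f ts) (Fun (Orig f) (map Var xs1 @ u # map Var xs2))"

text \<open>ins xs i us = <x_1..x_m>[u_1..u_j]_i (with i counted from 1).\<close>
definition ins :: "'v list \<Rightarrow> nat \<Rightarrow> ('f hsym, 'v) term list \<Rightarrow> ('f hsym, 'v) term list" where
  "ins xs i us = map Var (take (i - 1) xs) @ us @ map Var (drop i xs)"

definition rule_vars :: "('f, 'v) crule \<Rightarrow> 'v set" where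
  "rule_vars \<rho> = vars (fst \<rho>) \<union> vars (fst (snd \<rho>)) \<union>
     (\<Union>(a, b) \<in> set (snd (snd \<rho>)). vars a \<union> vars b)"

text \<open>The unconditional rules Xi(R); all variable choices satisfying the freshness
  requirements are included (this yields the same rewrite relation as any single choice).\<close>
inductive_set Xi :: "('f \<Rightarrow> nat) \<Rightarrow> ('f, 'v) crule set \<Rightarrow> ('f \<Rightarrow> ('f, 'v) crule list) \<Rightarrow>
    (('f hsym, 'v) term \<times> ('f hsym, 'v) term) set"
  for ar R enum where
  xi1: "1 \<le> i \<Longrightarrow> i \<le> mcount enum f \<Longrightarrow> enum f ! (i - 1) = (Fun f ls, r, cs) \<Longrightarrow>
     distinct xs \<Longrightarrow> length xs = mcount enum f \<Longrightarrow> set xs \<inter> rule_vars (Fun f ls, r, cs) = {} \<Longrightarrow>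
     cs = [] \<Longrightarrow>
     (Fun (Orig f) (map emb ls @ ins xs i [hconst Top]), xi enum Top r) \<in> Xi ar R enum"
| xi2: "1 \<le> i \<Longrightarrow> i \<le> mcount enum f \<Longrightarrow> enum f ! (i - 1) = (Fun f ls, r, cs) \<Longrightarrow>
     distinct xs \<Longrightarrow> length xs = mcount enum f \<Longrightarrow> set xs \<inter> rule_vars (Fun f ls, r, cs) = {} \<Longrightarrow>
     cs \<noteq> [] \<Longrightarrow>
     (Fun (Orig f) (map emb ls @ ins xs i [hconst Top]),
      Fun (Aux f i 1) (map emb ls @ ins xs i [xi enum Top (fst (cs ! 0))])) \<in> Xi ar R enum"
| xi3: "1 \<le> i \<Longrightarrow> i \<le> mcount enum f \<Longrightarrow> enum f ! (i - 1) = (Fun f ls, r, cs) \<Longrightarrow>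
     distinct xs \<Longrightarrow> length xs = mcount enum f \<Longrightarrow> set xs \<inter> rule_vars (Fun f ls, r, cs) = {} \<Longrightarrow>
     cs \<noteq> [] \<Longrightarrow>
     (Fun (Aux f i (length cs)) (map emb ls @ ins xs i (map (emb \<circ> snd) cs)),
      xi enum Top r) \<in> Xi ar R enum"
| xi4: "1 \<le> i \<Longrightarrow> i \<le> mcount enum f \<Longrightarrow> enum f ! (i - 1) = (Fun f ls, r, cs) \<Longrightarrow>
     distinct xs \<Longrightarrow> length xs = mcount enum f \<Longrightarrow> set xs \<inter> rule_vars (Fun f ls, r, cs) = {} \<Longrightarrow>
     1 \<le> j \<Longrightarrow> j < length cs \<Longrightarrow>
     (Fun (Aux f i j) (map emb ls @ ins xs i (map (emb \<circ> snd) (take j cs))),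
      Fun (Aux f i (Suc j)) (map emb ls @
         ins xs i (map (emb \<circ> snd) (take j cs) @ [xi enum Top (fst (cs ! j))]))) \<in> Xi ar R enum"
| xi5: "1 \<le> i \<Longrightarrow> i \<le> mcount enum f \<Longrightarrow> enum f ! (i - 1) = (Fun f ls, r, cs) \<Longrightarrow>
     distinct xs \<Longrightarrow> length xs = mcount enum f \<Longrightarrow> set xs \<inter> rule_vars (Fun f ls, r, cs) = {} \<Longrightarrow>
     1 \<le> j \<Longrightarrow> j \<le> length cs \<Longrightarrow>
     ap ar R enum (snd (cs ! (j - 1))) v \<Longrightarrow> linear v \<Longrightarrow>
     vars v \<inter> (set xs \<union> rule_vars (Fun f ls, r, cs)) = {} \<Longrightarrow>
     (Fun (Aux f i j) (map emb ls @ ins xs i (map (emb \<circ> snd) (take (j - 1) cs) @ [v])),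
      Fun (Orig f) (map emb ls @ ins xs i [hconst Bot])) \<in> Xi ar R enum"
| xi6: "1 \<le> i \<Longrightarrow> i \<le> mcount enum f \<Longrightarrow> enum f ! (i - 1) = (Fun f ls, r, cs) \<Longrightarrow>
     distinct xs \<Longrightarrow> length xs = mcount enum f \<Longrightarrow> set xs \<inter> rule_vars (Fun f ls, r, cs) = {} \<Longrightarrow>
     distinct ys \<Longrightarrow> length ys = length ls \<Longrightarrow> set ys \<inter> set xs = {} \<Longrightarrow>
     1 \<le> j \<Longrightarrow> j \<le> length ls \<Longrightarrow>
     ap ar R enum (ls ! (j - 1)) v \<Longrightarrow> linear v \<Longrightarrow>
     vars v \<inter> (set xs \<union> set ys) = {} \<Longrightarrow>
     (Fun (Orig f) (ins ys j [v] @ ins xs i [hconst Top]),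
      Fun (Orig f) (ins ys j [v] @ ins xs i [hconst Bot])) \<in> Xi ar R enum"

definition cs_step :: "('f hsym \<Rightarrow> nat set) \<Rightarrow> (('f hsym, 'v) term \<times> ('f hsym, 'v) term) set \<Rightarrow>
    ('f hsym, 'v) term \<Rightarrow> ('f hsym, 'v) term \<Rightarrow> bool" where
  "cs_step \<mu> S s t \<longleftrightarrow> (\<exists>C l r \<sigma>. (l, r) \<in> S \<and> active_ctxt \<mu> C \<and>
      s = plug C (subst \<sigma> l) \<and> t = plug C (subst \<sigma> r))"

definition terminating_on :: "('a \<Rightarrow> 'a \<Rightarrow> bool) \<Rightarrow> 'a set \<Rightarrow> bool" where
  "terminating_on rel A \<longleftrightarrow> (\<forall>s \<in> A. \<not> (\<exists>u. u 0 = s \<and> (\<forall>i. rel (u i) (u (Suc i)))))"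

fun zeta :: "('f \<Rightarrow> ('f, 'v) crule list) \<Rightarrow> (('f, 'v) gsym, 'v) term \<Rightarrow> ('f hsym, 'v) term" where
  "zeta enum (Var x) = Var x"
| "zeta enum (Fun (GCon c) ts) = Fun (Orig c) (map (zeta enum) ts)"
| "zeta enum (Fun (GLab f S) ts) = Fun (Orig f) (map (zeta enum) ts @
      map (\<lambda>\<rho>. if \<rho> \<in> S then hconst Top else hconst Bot) (enum f))"

end

theory Submission
  imports Defs
begin

text \<open>
  If a term \<open>s\<close> admits an infinite \<open>(\<rightarrow> \<union> \<sqsupset>)\<close>-sequence, then so does
  \<open>\<xi>\<^sub>\<top>(s) = \<zeta>(lab s)\<close> under \<open>(\<Xi>(R), \<mu>)\<close>: a conditional step with the \<open>i\<close>-th rule of \<open>f\<close> is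
  simulated by entering \<open>f\<^sub>i\<^sup>1\<close>, evaluating the \<open>j\<close>-th condition in the single active argument
  of \<open>f\<^sub>i\<^sup>j\<close> and leaving by rule (3), and a \<open>\<sqsupset>\<close>-step is the descent into that active argument.

  Conversely, every term reachable from some \<open>\<zeta>(s)\<close> is valid: each \<open>f\<^sub>i\<^sup>j\<close> records a correct
  partial evaluation of the conditions. Erasing flags and auxiliary arguments projects it to an
  \<open>\<F>\<close>-term, and a step of \<open>\<Xi>(R)\<close> either projects to an \<open>R\<close>-step, or keeps the projection and
  decreases the flags at the root, or happens in an active argument; the active arguments of
  \<open>f\<^sub>i\<^sup>j\<close> project to \<open>\<sqsupset>\<close>-reducts followed by \<open>\<rightarrow>\<^sup>*\<close>. Quasi-decreasingness therefore yields
  termination by a nested induction on the projection (ordered by \<open>(\<rightarrow> \<union> \<sqsupset> \<union> \<rhd>)\<^sup>+\<close>),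
  the root flags, and the active arguments.
\<close>

lemma vars_Var [simp]: "vars (Var x) = {x}"
  by (simp add: vars_def)

lemma vars_Fun [simp]: "vars (Fun f ts) = (\<Union>t\<in>set ts. vars t)"
  by (auto simp: vars_def)

lemma subst_cong: "(\<And>x. x \<in> vars t \<Longrightarrow> \<sigma> x = \<tau> x) \<Longrightarrow> subst \<sigma> t = subst \<tau> t"
  by (induction t) auto

lemma subst_eq_imp_eq_on_vars: "subst \<sigma> t = subst \<tau> t \<Longrightarrow> x \<in> vars t \<Longrightarrow> \<sigma> x = \<tau> x"
  by (induction t) auto

lemma subst_eq_on_covered_vars:
  assumes "map (subst \<sigma>') us = map (subst \<sigma>) us" and "vars t \<subseteq> (\<Union>u\<in>set us. vars u)"
  shows "subst (g \<circ> \<sigma>') t = subst (g \<circ> \<sigma>) t"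
proof (rule subst_cong)
  fix x assume "x \<in> vars t"
  with assms(2) obtain u where "u \<in> set us" "x \<in> vars u" by blast
  with assms(1) have "\<sigma>' x = \<sigma> x" by (metis map_eq_conv subst_eq_imp_eq_on_vars)
  then show "(g \<circ> \<sigma>') x = (g \<circ> \<sigma>) x" by simp
qed

lemma wf_term_subst: "wf_term ar (subst \<sigma> t) \<longleftrightarrow> wf_term ar t \<and> (\<forall>x\<in>vars t. wf_term ar (\<sigma> x))"
  by (induction t) auto

lemma wf_term_plugD: "wf_term ar (plug C t) \<Longrightarrow> wf_term ar t"
  by (induction C) auto

lemma wf_term_plug_replace: "wf_term ar (plug C t) \<Longrightarrow> wf_term ar t' \<Longrightarrow> wf_term ar (plug C t')"
  by (induction C) auto

lemma size_less_plug: "C \<noteq> Hole \<Longrightarrow> size t < size (plug C t)"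
proof (induction C)
  case (More f ss C ts)
  have "size (plug C t) < size (plug (More f ss C ts) t)" by simp
  with More show ?case by (cases "C = Hole") auto
qed simp

fun ctxt_comp :: "('f, 'v) ctxt \<Rightarrow> ('f, 'v) ctxt \<Rightarrow> ('f, 'v) ctxt" where
  "ctxt_comp Hole D = D"
| "ctxt_comp (More f ss C ts) D = More f ss (ctxt_comp C D) ts"

lemma plug_ctxt_comp [simp]: "plug (ctxt_comp C D) t = plug C (plug D t)"
  by (induction C) auto

lemma active_ctxt_comp: "active_ctxt \<mu> C \<Longrightarrow> active_ctxt \<mu> D \<Longrightarrow> active_ctxt \<mu> (ctxt_comp C D)"
  by (induction C) auto

definition proper_subterm :: "(('f, 'v) term \<times> ('f, 'v) term) set" where
  "proper_subterm = {(t, s). \<exists>C. C \<noteq> Hole \<and> s = plug C t}"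

lemma acc_iff_no_descending_chain:
  "x \<in> Wellfounded.acc r \<longleftrightarrow> \<not> (\<exists>u. u 0 = x \<and> (\<forall>i. (u (Suc i), u i) \<in> r))"
proof
  assume "x \<in> Wellfounded.acc r"
  then have "\<forall>u. u 0 = x \<longrightarrow> \<not> (\<forall>i. (u (Suc i), u i) \<in> r)"
  proof (induction rule: acc_induct_rule)
    case (1 x)
    show ?case
    proof (intro allI impI notI)
      fix u assume "u 0 = x" and chain: "\<forall>i. (u (Suc i), u i) \<in> r"
      then have "(u 1, x) \<in> r" by (metis One_nat_def)
      from 1(2)[OF this, THEN spec, of "\<lambda>n. u (Suc n)"]
      have "\<not> (\<forall>i. (u (Suc (Suc i)), u (Suc i)) \<in> r)" by simp
      with chain show False by blast
    qed
  qed
  then show "\<not> (\<exists>u. u 0 = x \<and> (\<forall>i. (u (Suc i), u i) \<in> r))" by blast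
next
  assume no_chain: "\<not> (\<exists>u. u 0 = x \<and> (\<forall>i. (u (Suc i), u i) \<in> r))"
  show "x \<in> Wellfounded.acc r"
  proof (rule ccontr)
    assume x: "x \<notin> Wellfounded.acc r"
    define down where "down = (\<lambda>y. SOME z. (z, y) \<in> r \<and> z \<notin> Wellfounded.acc r)"
    have down: "(down y, y) \<in> r \<and> down y \<notin> Wellfounded.acc r"
      if "y \<notin> Wellfounded.acc r" for y
      unfolding down_def by (rule someI_ex) (meson not_acc_down that)
    define u where "u n = (down ^^ n) x" for n
    have "u n \<notin> Wellfounded.acc r" for n
      by (induction n) (simp_all add: u_def x down)
    then have "\<forall>i. (u (Suc i), u i) \<in> r" using down by (simp add: u_def)
    moreover have "u 0 = x" by (simp add: u_def)
    ultimately show False using no_chain by blast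
  qed
qed

lemma acc_trancl: "x \<in> Wellfounded.acc r \<Longrightarrow> x \<in> Wellfounded.acc (r\<^sup>+)"
proof (induction rule: acc_induct_rule)
  case (1 x)
  show ?case
  proof (rule accI)
    fix y assume "(y, x) \<in> r\<^sup>+"
    then show "y \<in> Wellfounded.acc (r\<^sup>+)"
    proof (cases rule: tranclE)
      case base then show ?thesis using 1 by blast
    next
      case (step z) then show ?thesis using 1 acc_downward by metis
    qed
  qed
qed

lemma tranclp_imp_converse_trancl: "r\<^sup>+\<^sup>+ x y \<Longrightarrow> (y, x) \<in> {(b, a). r a b}\<^sup>+"
  by (induction rule: tranclp_induct) (auto intro: trancl_into_trancl2)

lemma terminating_on_iff_acc:
  "terminating_on rel A \<longleftrightarrow> A \<subseteq> Wellfounded.acc {(y, x). rel x y}"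
  unfolding terminating_on_def subset_iff acc_iff_no_descending_chain by auto

lemma cs_step_root: "(l, r) \<in> S \<Longrightarrow> cs_step \<mu> S (subst \<sigma> l) (subst \<sigma> r)"
  unfolding cs_step_def by (rule exI[of _ Hole]) auto

lemma cs_step_ctxt: "cs_step \<mu> S s t \<Longrightarrow> active_ctxt \<mu> C \<Longrightarrow> cs_step \<mu> S (plug C s) (plug C t)"
  unfolding cs_step_def by (metis active_ctxt_comp plug_ctxt_comp)

lemma cs_step_trancl_ctxt:
  "(cs_step \<mu> S)\<^sup>+\<^sup>+ s t \<Longrightarrow> active_ctxt \<mu> C \<Longrightarrow> (cs_step \<mu> S)\<^sup>+\<^sup>+ (plug C s) (plug C t)"
  by (induction rule: tranclp_induct) (auto intro: tranclp.trancl_into_trancl cs_step_ctxt)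

lemma cs_step_rtrancl_ctxt:
  "(cs_step \<mu> S)\<^sup>*\<^sup>* s t \<Longrightarrow> active_ctxt \<mu> C \<Longrightarrow> (cs_step \<mu> S)\<^sup>*\<^sup>* (plug C s) (plug C t)"
  by (induction rule: rtranclp_induct) (auto intro: rtranclp.rtrancl_into_rtrancl cs_step_ctxt)

lemma cs_step_root_or_arg:
  assumes "cs_step \<mu> S t t'"
  obtains (root) l r \<sigma> where "(l, r) \<in> S" "t = subst \<sigma> l" "t' = subst \<sigma> r"
  | (arg) g ss u u' ts where "t = Fun g (ss @ u # ts)" "t' = Fun g (ss @ u' # ts)"
      "Suc (length ss) \<in> \<mu> g" "cs_step \<mu> S u u'"
proof -
  from assms obtain C l r \<sigma> where lr: "(l, r) \<in> S" "active_ctxt \<mu> C"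
    and t: "t = plug C (subst \<sigma> l)" "t' = plug C (subst \<sigma> r)"
    unfolding cs_step_def by blast
  show ?thesis
  proof (cases C)
    case Hole
    with lr t show ?thesis using root by simp
  next
    case (More g ss D ts)
    with lr have "cs_step \<mu> S (plug D (subst \<sigma> l)) (plug D (subst \<sigma> r))"
      unfolding cs_step_def by auto
    with lr t More show ?thesis using arg by simp
  qed
qed

lemma rstep_ctxt: "rstep R s t \<Longrightarrow> rstep R (plug C s) (plug C t)"
  by (erule rstep.cases) (metis plug_ctxt_comp rstep.intros)

lemma rstep_arg: "rstep R u u' \<Longrightarrow> rstep R (Fun f (ss @ u # ts)) (Fun f (ss @ u' # ts))"
  using rstep_ctxt[of R u u' "More f ss Hole ts"] by simp

abbreviation conds_hold ::
    "('f, 'v) crule set \<Rightarrow> ('v \<Rightarrow> ('f, 'v) term) \<Rightarrow> (('f, 'v) term \<times> ('f, 'v) term) list \<Rightarrow> nat \<Rightarrow> bool"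
  where "conds_hold R \<sigma> cs n \<equiv>
    \<forall>k<n. (rstep R)\<^sup>*\<^sup>* (subst \<sigma> (fst (cs ! k))) (subst \<sigma> (snd (cs ! k)))"

lemma rstep_root:
  "(l, r, cs) \<in> R \<Longrightarrow> conds_hold R \<sigma> cs (length cs)
   \<Longrightarrow> rstep R (subst \<sigma> l) (subst \<sigma> r)"
  using rstep.intros[of l r cs R \<sigma> Hole] by simp

lemma sqsup_ctxt: "sqsup R s t \<Longrightarrow> sqsup R (plug C s) t"
  unfolding sqsup_def by (metis plug_ctxt_comp)

definition qd_step :: "('f, 'v) crule set \<Rightarrow> (('f, 'v) term \<times> ('f, 'v) term) set" where
  "qd_step R = {(t, s). rstep R s t \<or> sqsup R s t}"

lemma quasi_decreasing_term_iff_acc: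
  "quasi_decreasing_term R s \<longleftrightarrow> s \<in> Wellfounded.acc (qd_step R)"
  unfolding quasi_decreasing_term_def qd_step_def acc_iff_no_descending_chain by auto

lemma rsteps_qd_step: "(rstep R)\<^sup>*\<^sup>* s t \<Longrightarrow> (t, s) \<in> (qd_step R)\<^sup>*"
  by (induction rule: rtranclp_induct) (auto simp: qd_step_def intro: converse_rtrancl_into_rtrancl)

text \<open>Steps of \<open>\<rightarrow>\<close> and \<open>\<sqsupset>\<close> from a subterm lift to the whole term, so adding the
  proper-subterm relation preserves accessibility (by induction on the size of the subterm).\<close>
lemma acc_qd_step_proper_subterm:
  assumes "s \<in> Wellfounded.acc (qd_step R)"
  shows "s = plug C t \<Longrightarrow> t \<in> Wellfounded.acc (qd_step R \<union> proper_subterm)"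
  using assms
proof (induction arbitrary: C t rule: acc_induct_rule)
  case (1 s)
  show ?case using 1(3)
  proof (induction t arbitrary: C rule: measure_induct_rule[of size])
    case (less t)
    show ?case
    proof (rule accI)
      fix t' assume "(t', t) \<in> qd_step R \<union> proper_subterm"
      then consider "rstep R t t'" | "sqsup R t t'" | D where "D \<noteq> Hole" "t = plug D t'"
        unfolding qd_step_def proper_subterm_def by blast
      then show "t' \<in> Wellfounded.acc (qd_step R \<union> proper_subterm)"
      proof cases
        case 1
        then have "(plug C t', s) \<in> qd_step R"
          using less.prems rstep_ctxt by (auto simp: qd_step_def)
        then show ?thesis using "1.IH" by blast
      next
        case 2
        then have "(t', s) \<in> qd_step R" using less.prems sqsup_ctxt by (auto simp: qd_step_def)
        then show ?thesis using "1.IH"[of t' Hole] by simp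
      next
        case (3 D)
        then show ?thesis
          using less.IH[of t' "ctxt_comp C D"] less.prems size_less_plug[OF 3(1)] by simp
      qed
    qed
  qed
qed

lemma finite_rule_vars: "finite (rule_vars \<rho>)"
  unfolding rule_vars_def vars_def by (auto split: prod.splits)

lemma finite_fresh_list:
  assumes "infinite (UNIV :: 'v set)" and "finite (V :: 'v set)"
  obtains xs where "distinct xs" "length xs = n" "set xs \<inter> V = {}"
proof -
  have "infinite (UNIV - V)" using assms by (simp add: Diff_infinite_finite)
  then obtain B where B: "B \<subseteq> UNIV - V" "finite B" "card B = n"
    by (meson infinite_arbitrarily_large)
  obtain xs where "set xs = B" "distinct xs" using finite_distinct_list[OF B(2)] by blast
  with B that show ?thesis using distinct_card by fastforce
qed

lemma vars_emb [simp]: "vars (emb u) = vars u"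
  by (induction u) auto

lemma vars_xi [simp]: "vars (xi enum st u) = vars u"
  by (induction u) auto

lemma xi_subst: "xi enum st (subst \<sigma> t) = subst (xi enum st \<circ> \<sigma>) (xi enum st t)"
  by (induction t) auto

lemma map_subst_ins:
  "map (subst \<sigma>) (ins xs i us) = map \<sigma> (take (i - 1) xs) @ map (subst \<sigma>) us @ map \<sigma> (drop i xs)"
  by (simp add: ins_def)

fun xi_ctxt :: "('f \<Rightarrow> ('f, 'v) crule list) \<Rightarrow> 'f hsym \<Rightarrow> ('f, 'v) ctxt \<Rightarrow> ('f hsym, 'v) ctxt" where
  "xi_ctxt enum st Hole = Hole"
| "xi_ctxt enum st (More f ss C ts) = More (Orig f) (map (xi enum st) ss) (xi_ctxt enum st C)
     (map (xi enum st) ts @ replicate (mcount enum f) (hconst st))"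

lemma xi_plug: "xi enum st (plug C t) = plug (xi_ctxt enum st C) (xi enum st t)"
  by (induction C) auto

lemma active_xi_ctxt: "wf_term ar (plug C t) \<Longrightarrow> active_ctxt (mu_H ar) (xi_ctxt enum st C)"
  by (induction C) (auto simp: mu_H_def)

fun lab :: "('f, 'v) crule set \<Rightarrow> ('f, 'v) term \<Rightarrow> (('f, 'v) gsym, 'v) term" where
  "lab R (Var x) = Var x"
| "lab R (Fun f ts) = Fun (if defined R f then GLab f (rules_of R f) else GCon f) (map (lab R) ts)"

lemma wf_gterm_lab: "wf_term ar s \<Longrightarrow> wf_gterm ar R (lab R s)"
  by (induction s) (auto simp: rules_of_def)

locale transformed_cctrs =
  fixes ar :: "'f \<Rightarrow> nat" and R :: "('f, 'v) crule set" and enum :: "'f \<Rightarrow> ('f, 'v) crule list"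
  assumes infinite_vars: "infinite (UNIV :: 'v set)"
    and strong: "strong_cctrs ar R"
    and enumeration: "enumeration R enum"
begin

abbreviation xi_step :: "('f hsym, 'v) term \<Rightarrow> ('f hsym, 'v) term \<Rightarrow> bool" where
  "xi_step \<equiv> cs_step (mu_H ar) (Xi ar R enum)"

abbreviation xi_rel :: "(('f hsym, 'v) term \<times> ('f hsym, 'v) term) set" where
  "xi_rel \<equiv> {(t', t). xi_step t t'}"

abbreviation xi_top :: "('f, 'v) term \<Rightarrow> ('f hsym, 'v) term" where
  "xi_top \<equiv> xi enum Top"

lemma xi_step_root: "(l, r) \<in> Xi ar R enum \<Longrightarrow> xi_step (subst \<sigma> l) (subst \<sigma> r)"
  by (rule cs_step_root)

lemma cctrs: "cctrs ar R"
  using strong by (simp add: strong_cctrs_def)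

lemma rule_lhs_Fun:
  assumes "(l, r, cs) \<in> R"
  obtains f ls where "l = Fun f ls"
  using cctrs[unfolded cctrs_def, THEN bspec, OF assms] by blast

lemma cctrs_ruleD:
  assumes "(Fun f ls, r, cs) \<in> R"
  shows "length ls = ar f" "\<forall>l \<in> set ls. wf_term ar l \<and> constr_term R l" "wf_term ar r"
    "\<forall>p \<in> set cs. wf_term ar (fst p) \<and> wf_term ar (snd p) \<and> constr_term R (snd p)"
    "vars r \<subseteq> (\<Union>l\<in>set ls. vars l) \<union> (\<Union>b \<in> set (map snd cs). vars b)"
    "\<forall>k < length cs. vars (fst (cs ! k)) \<subseteq>
       (\<Union>l\<in>set ls. vars l) \<union> (\<Union>b \<in> set (take k (map snd cs)). vars b)"
proof -
  from cctrs[unfolded cctrs_def, THEN bspec, OF assms] obtain f' ls' r' cs'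
    where eq: "(Fun f ls, r, cs) = (Fun f' ls', r', cs')"
    and props: "wf_term ar (Fun f' ls')"
    "wf_term ar r'" "\<forall>(a, b) \<in> set cs'. wf_term ar a \<and> wf_term ar b"
    "\<forall>l \<in> set ls'. constr_term R l" "\<forall>(a, b) \<in> set cs'. constr_term R b"
    "vars r' \<subseteq> vars (Fun f' ls') \<union> (\<Union>b \<in> set (map snd cs'). vars b)"
    "\<forall>k < length cs'. vars (fst (cs' ! k)) \<subseteq>
       vars (Fun f' ls') \<union> (\<Union>b \<in> set (take k (map snd cs')). vars b)"
    by blast
  from eq have "f' = f" "ls' = ls" "r' = r" "cs' = cs" by simp_all
  with props show "length ls = ar f" "\<forall>l \<in> set ls. wf_term ar l \<and> constr_term R l" "wf_term ar r"
    "vars r \<subseteq> (\<Union>l\<in>set ls. vars l) \<union> (\<Union>b \<in> set (map snd cs). vars b)"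
    "\<forall>k < length cs. vars (fst (cs ! k)) \<subseteq>
       (\<Union>l\<in>set ls. vars l) \<union> (\<Union>b \<in> set (take k (map snd cs)). vars b)"
    by simp_all
  from props(3,5) \<open>cs' = cs\<close>
  show "\<forall>p \<in> set cs. wf_term ar (fst p) \<and> wf_term ar (snd p) \<and> constr_term R (snd p)" by fastforce
qed

lemma enum_nth_rule:
  assumes "1 \<le> i" "i \<le> mcount enum f" "enum f ! (i - 1) = (Fun g ls, r, cs)"
  shows "(Fun g ls, r, cs) \<in> R" "g = f"
proof -
  have "(Fun g ls, r, cs) \<in> set (enum f)"
    using assms unfolding mcount_def
    by (metis One_nat_def Suc_le_eq diff_Suc_less nth_mem order_less_le_trans)
  then show "(Fun g ls, r, cs) \<in> R" "g = f"
    using enumeration unfolding enumeration_def rules_of_def by auto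
qed

lemma rule_enum_index:
  assumes "(Fun f ls, r, cs) \<in> R"
  obtains i where "1 \<le> i" "i \<le> mcount enum f" "enum f ! (i - 1) = (Fun f ls, r, cs)"
proof -
  have "(Fun f ls, r, cs) \<in> set (enum f)"
    using assms enumeration by (simp add: enumeration_def rules_of_def)
  then obtain k where "k < length (enum f)" "enum f ! k = (Fun f ls, r, cs)"
    by (meson in_set_conv_nth)
  with that[of "Suc k"] show ?thesis by (simp add: mcount_def)
qed

lemma mcount_constructor: "\<not> defined R c \<Longrightarrow> mcount enum c = 0"
proof -
  assume "\<not> defined R c"
  then have "set (enum c) = {}"
    using enumeration unfolding enumeration_def rules_of_def defined_def by auto
  then show ?thesis by (simp add: mcount_def)
qed

lemma xi_constr_term: "constr_term R u \<Longrightarrow> xi enum st u = emb u"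
proof (induction u)
  case (Fun f ts)
  then have "\<not> defined R f" "\<forall>t\<in>set ts. constr_term R t" by (auto simp: constr_term_def)
  with Fun show ?case by (simp add: mcount_constructor)
qed simp

section \<open>Simulating conditional rewriting\<close>

text \<open>Instantiating the fresh flag variables by \<open>\<top>\<close> turns the left-hand sides of \<open>\<Xi>(R)\<close>
  into \<open>\<xi>\<^sub>\<top>\<close>-images of instances of left-hand sides of \<open>R\<close>.\<close>
definition top_subst :: "'v list \<Rightarrow> ('v \<Rightarrow> ('f, 'v) term) \<Rightarrow> 'v \<Rightarrow> ('f hsym, 'v) term" where
  "top_subst xs \<sigma> x = (if x \<in> set xs then hconst Top else xi_top (\<sigma> x))"

text \<open>\<open>\<xi>\<^sub>\<top>\<close> of \<open>f\<^sub>i\<^sup>j(l\<sigma>, \<top>, \<dots>, b\<^sub>1\<sigma>, \<dots>, b\<^sub>j\<^sub>-\<^sub>1\<sigma>, \<box>, \<top>, \<dots>)\<close>, whose hole evaluates the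
  \<open>j\<close>-th condition.\<close>
definition cond_ctxt :: "('v \<Rightarrow> ('f, 'v) term) \<Rightarrow> 'f \<Rightarrow> nat \<Rightarrow> nat \<Rightarrow> ('f, 'v) term list \<Rightarrow>
    (('f, 'v) term \<times> ('f, 'v) term) list \<Rightarrow> ('f hsym, 'v) ctxt" where
  "cond_ctxt \<sigma> f i j ls cs = More (Aux f i j)
     (map (xi_top \<circ> subst \<sigma>) ls @ replicate (i - 1) (hconst Top) @
      map (xi_top \<circ> subst \<sigma> \<circ> snd) (take (j - 1) cs))
     Hole (replicate (mcount enum f - i) (hconst Top))"

lemma top_subst_xi: "vars t \<inter> set xs = {} \<Longrightarrow> subst (top_subst xs \<sigma>) (xi_top t) = xi_top (subst \<sigma> t)"
  unfolding xi_subst by (rule subst_cong) (auto simp: top_subst_def)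

lemma top_subst_emb:
  "vars t \<inter> set xs = {} \<Longrightarrow> constr_term R t \<Longrightarrow> subst (top_subst xs \<sigma>) (emb t) = xi_top (subst \<sigma> t)"
  using top_subst_xi xi_constr_term by metis

lemma map_top_subst_ins:
  assumes "length xs = m" "1 \<le> i" "i \<le> m"
  shows "map (subst (top_subst xs \<sigma>)) (ins xs i us) =
    replicate (i - 1) (hconst Top) @ map (subst (top_subst xs \<sigma>)) us @
    replicate (m - i) (hconst Top)"
proof -
  have "map (top_subst xs \<sigma>) ys = replicate (length ys) (hconst Top)" if "set ys \<subseteq> set xs" for ys
    using that by (induction ys) (auto simp: top_subst_def)
  then show ?thesis
    using assms by (simp add: map_subst_ins set_take_subset set_drop_subset)
qed

context
  fixes f i ls r cs xs
  assumes index: "1 \<le> i" "i \<le> mcount enum f"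
    and rule: "enum f ! (i - 1) = (Fun f ls, r, cs)"
    and fresh: "distinct xs" "length xs = mcount enum f" "set xs \<inter> rule_vars (Fun f ls, r, cs) = {}"
begin

lemma enum_rule_in_R: "(Fun f ls, r, cs) \<in> R"
  using enum_nth_rule(1)[OF index rule] .

lemma fresh_for_rule:
  "\<And>l. l \<in> set ls \<Longrightarrow> vars l \<inter> set xs = {}" "vars r \<inter> set xs = {}"
  "\<And>p. p \<in> set cs \<Longrightarrow> vars (fst p) \<inter> set xs = {}"
  "\<And>p. p \<in> set cs \<Longrightarrow> vars (snd p) \<inter> set xs = {}"
  using fresh(3) unfolding rule_vars_def by (fastforce split: prod.splits)+

lemma map_top_subst_emb_lhs: "map (subst (top_subst xs \<sigma>) \<circ> emb) ls = map (xi_top \<circ> subst \<sigma>) ls"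
  using cctrs_ruleD(2)[OF enum_rule_in_R] fresh_for_rule(1) by (auto simp: top_subst_emb)

lemma top_subst_lhs:
  "subst (top_subst xs \<sigma>) (Fun (Orig f) (map emb ls @ ins xs i [hconst Top])) =
    xi_top (subst \<sigma> (Fun f ls))"
proof -
  have "mcount enum f = (i - 1) + Suc (mcount enum f - i)" using index by simp
  then have "replicate (i - 1) (hconst Top) @ hconst Top #
      replicate (mcount enum f - i) (hconst Top) =
      replicate (mcount enum f) (hconst Top)"
    by (metis replicate_Suc replicate_add)
  then show ?thesis by (simp add: map_top_subst_ins[OF fresh(2) index] map_top_subst_emb_lhs)
qed

lemma top_subst_emb_cond_rhs:
  assumes "p \<in> set cs"
  shows "subst (top_subst xs \<sigma>) (emb (snd p)) = xi_top (subst \<sigma> (snd p))"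
proof (rule top_subst_emb)
  show "vars (snd p) \<inter> set xs = {}" using fresh_for_rule(4)[OF assms] .
  show "constr_term R (snd p)" using cctrs_ruleD(4)[OF enum_rule_in_R] assms by (cases p) auto
qed

lemma top_subst_Aux:
  assumes "set ps \<subseteq> set cs"
  shows "subst (top_subst xs \<sigma>)
      (Fun (Aux f i j) (map emb ls @ ins xs i (map (emb \<circ> snd) ps @ us))) =
    Fun (Aux f i j) (map (xi_top \<circ> subst \<sigma>) ls @ replicate (i - 1) (hconst Top) @
      map (xi_top \<circ> subst \<sigma> \<circ> snd) ps @ map (subst (top_subst xs \<sigma>)) us @
      replicate (mcount enum f - i) (hconst Top))"
proof -
  from assms top_subst_emb_cond_rhs
  have "map (subst (top_subst xs \<sigma>) \<circ> emb \<circ> snd) ps = map (xi_top \<circ> subst \<sigma> \<circ> snd) ps"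
    by auto
  then show ?thesis by (simp add: map_top_subst_ins[OF fresh(2) index] map_top_subst_emb_lhs)
qed

lemma active_cond_ctxt: "1 \<le> j \<Longrightarrow> j \<le> length cs \<Longrightarrow> active_ctxt (mu_H ar) (cond_ctxt \<sigma> f i j ls cs)"
  using index cctrs_ruleD(1)[OF enum_rule_in_R] by (simp add: cond_ctxt_def mu_H_def)

lemma plug_cond_ctxt:
  "plug (cond_ctxt \<sigma> f i j ls cs) u = Fun (Aux f i j) (map (xi_top \<circ> subst \<sigma>) ls @
     replicate (i - 1) (hconst Top) @ map (xi_top \<circ> subst \<sigma> \<circ> snd) (take (j - 1) cs) @ [u] @
     replicate (mcount enum f - i) (hconst Top))"
  by (simp add: cond_ctxt_def)

lemma xi_step_unconditional:
  assumes "cs = []"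
  shows "xi_step (xi_top (subst \<sigma> (Fun f ls))) (xi_top (subst \<sigma> r))"
  using xi_step_root[OF Xi.xi1[OF index rule fresh assms], of "top_subst xs \<sigma>"]
  unfolding top_subst_lhs top_subst_xi[OF fresh_for_rule(2)] .

lemma xi_step_first_condition:
  assumes "cs \<noteq> []"
  shows "xi_step (xi_top (subst \<sigma> (Fun f ls)))
    (plug (cond_ctxt \<sigma> f i 1 ls cs) (xi_top (subst \<sigma> (fst (cs ! 0)))))"
proof -
  have "subst (top_subst xs \<sigma>) (xi_top (fst (cs ! 0))) = xi_top (subst \<sigma> (fst (cs ! 0)))"
    using assms by (intro top_subst_xi fresh_for_rule(3)) simp
  with top_subst_Aux[of "[]" \<sigma> 1 "[xi_top (fst (cs ! 0))]"]
  have "subst (top_subst xs \<sigma>) (Fun (Aux f i 1) (map emb ls @ ins xs i [xi_top (fst (cs ! 0))])) =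
      plug (cond_ctxt \<sigma> f i 1 ls cs) (xi_top (subst \<sigma> (fst (cs ! 0))))"
    by (simp add: plug_cond_ctxt)
  with xi_step_root[OF Xi.xi2[OF index rule fresh assms], of "top_subst xs \<sigma>"]
  show ?thesis unfolding top_subst_lhs by simp
qed

lemma xi_step_next_condition:
  assumes "1 \<le> j" "j < length cs"
  shows "xi_step (plug (cond_ctxt \<sigma> f i j ls cs) (xi_top (subst \<sigma> (snd (cs ! (j - 1))))))
    (plug (cond_ctxt \<sigma> f i (Suc j) ls cs) (xi_top (subst \<sigma> (fst (cs ! j)))))"
proof -
  have take_j: "take j cs = take (j - 1) cs @ [cs ! (j - 1)]"
    using assms
    by (metis Suc_diff_1 less_imp_diff_less less_le_trans take_Suc_conv_app_nth zero_less_one)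
  have "subst (top_subst xs \<sigma>) (emb (snd (cs ! (j - 1)))) = xi_top (subst \<sigma> (snd (cs ! (j - 1))))"
    using assms by (intro top_subst_emb_cond_rhs) simp
  with top_subst_Aux[of "take (j - 1) cs" \<sigma> j "[emb (snd (cs ! (j - 1)))]"]
  have lhs: "subst (top_subst xs \<sigma>)
      (Fun (Aux f i j) (map emb ls @ ins xs i (map (emb \<circ> snd) (take j cs)))) =
      plug (cond_ctxt \<sigma> f i j ls cs) (xi_top (subst \<sigma> (snd (cs ! (j - 1)))))"
    by (simp add: plug_cond_ctxt take_j set_take_subset)
  have "subst (top_subst xs \<sigma>) (xi_top (fst (cs ! j))) = xi_top (subst \<sigma> (fst (cs ! j)))"
    using assms by (intro top_subst_xi fresh_for_rule(3)) simp
  with top_subst_Aux[of "take j cs" \<sigma> "Suc j" "[xi_top (fst (cs ! j))]"]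
  have rhs: "subst (top_subst xs \<sigma>) (Fun (Aux f i (Suc j)) (map emb ls @
        ins xs i (map (emb \<circ> snd) (take j cs) @ [xi_top (fst (cs ! j))]))) =
      plug (cond_ctxt \<sigma> f i (Suc j) ls cs) (xi_top (subst \<sigma> (fst (cs ! j))))"
    by (simp add: plug_cond_ctxt set_take_subset)
  from xi_step_root[OF Xi.xi4[OF index rule fresh assms], of "top_subst xs \<sigma>"]
  show ?thesis unfolding lhs rhs .
qed

lemma xi_step_last_condition:
  assumes "cs \<noteq> []"
  shows "xi_step (plug (cond_ctxt \<sigma> f i (length cs) ls cs) (xi_top (subst \<sigma> (snd (last cs)))))
    (xi_top (subst \<sigma> r))"
proof -
  have cs: "map (emb \<circ> snd) cs = map (emb \<circ> snd) (butlast cs) @ [emb (snd (last cs))]"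
    "take (length cs - 1) cs = butlast cs"
    using assms by (induction cs rule: rev_induct) auto
  have "subst (top_subst xs \<sigma>) (emb (snd (last cs))) = xi_top (subst \<sigma> (snd (last cs)))"
    using assms by (intro top_subst_emb_cond_rhs) simp
  with top_subst_Aux[of "butlast cs" \<sigma> "length cs" "[emb (snd (last cs))]"] cs
  have "subst (top_subst xs \<sigma>)
      (Fun (Aux f i (length cs)) (map emb ls @ ins xs i (map (emb \<circ> snd) cs))) =
      plug (cond_ctxt \<sigma> f i (length cs) ls cs) (xi_top (subst \<sigma> (snd (last cs))))"
    by (simp add: plug_cond_ctxt in_set_butlastD subsetI)
  with xi_step_root[OF Xi.xi3[OF index rule fresh assms], of "top_subst xs \<sigma>"]
  show ?thesis unfolding top_subst_xi[OF fresh_for_rule(2)] by simp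
qed

lemma xi_steps_conditions:
  assumes "n < length cs"
    and "\<forall>k<n. xi_step\<^sup>*\<^sup>* (xi_top (subst \<sigma> (fst (cs ! k)))) (xi_top (subst \<sigma> (snd (cs ! k))))"
  shows "xi_step\<^sup>+\<^sup>+ (xi_top (subst \<sigma> (Fun f ls)))
    (plug (cond_ctxt \<sigma> f i (Suc n) ls cs) (xi_top (subst \<sigma> (fst (cs ! n)))))"
  using assms
proof (induction n)
  case 0
  then show ?case using xi_step_first_condition[of \<sigma>] by auto
next
  case (Suc n)
  then have "xi_step\<^sup>+\<^sup>+ (xi_top (subst \<sigma> (Fun f ls)))
      (plug (cond_ctxt \<sigma> f i (Suc n) ls cs) (xi_top (subst \<sigma> (fst (cs ! n)))))"
    by simp
  also have "xi_step\<^sup>*\<^sup>* \<dots> (plug (cond_ctxt \<sigma> f i (Suc n) ls cs) (xi_top (subst \<sigma> (snd (cs ! n)))))"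
    using Suc.prems by (intro cs_step_rtrancl_ctxt active_cond_ctxt) auto
  also have "xi_step \<dots>
      (plug (cond_ctxt \<sigma> f i (Suc (Suc n)) ls cs) (xi_top (subst \<sigma> (fst (cs ! Suc n)))))"
    using xi_step_next_condition[of "Suc n" \<sigma>] Suc.prems by simp
  finally show ?case .
qed

end

lemma rule_enum_index_fresh:
  assumes "(Fun f ls, r, cs) \<in> R"
  obtains i xs where "1 \<le> i" "i \<le> mcount enum f" "enum f ! (i - 1) = (Fun f ls, r, cs)"
    "distinct xs" "length xs = mcount enum f" "set xs \<inter> rule_vars (Fun f ls, r, cs) = {}"
proof -
  obtain i where "1 \<le> i" "i \<le> mcount enum f" "enum f ! (i - 1) = (Fun f ls, r, cs)"
    by (rule rule_enum_index[OF assms])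
  moreover obtain xs where "distinct xs" "length xs = mcount enum f"
    "set xs \<inter> rule_vars (Fun f ls, r, cs) = {}"
    by (rule finite_fresh_list[OF infinite_vars finite_rule_vars])
  ultimately show ?thesis by (rule that)
qed

lemma xi_steps_rule:
  assumes rule: "(Fun f ls, r, cs) \<in> R"
    and conds: "\<forall>k<length cs.
      xi_step\<^sup>*\<^sup>* (xi_top (subst \<sigma> (fst (cs ! k)))) (xi_top (subst \<sigma> (snd (cs ! k))))"
  shows "xi_step\<^sup>+\<^sup>+ (xi_top (subst \<sigma> (Fun f ls))) (xi_top (subst \<sigma> r))"
proof -
  obtain i xs where index: "1 \<le> i" "i \<le> mcount enum f" and e: "enum f ! (i - 1) = (Fun f ls, r, cs)"
    and fresh: "distinct xs" "length xs = mcount enum f" "set xs \<inter> rule_vars (Fun f ls, r, cs) = {}"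
    by (rule rule_enum_index_fresh[OF rule])
  show ?thesis
  proof (cases "cs = []")
    case True
    then show ?thesis using xi_step_unconditional[OF index e fresh] by blast
  next
    case False
    then have last: "last cs = cs ! (length cs - 1)" "Suc (length cs - 1) = length cs"
      by (simp_all add: last_conv_nth)
    from False have "xi_step\<^sup>+\<^sup>+ (xi_top (subst \<sigma> (Fun f ls)))
        (plug (cond_ctxt \<sigma> f i (length cs) ls cs) (xi_top (subst \<sigma> (fst (last cs)))))"
      using xi_steps_conditions[OF index e fresh, of "length cs - 1" \<sigma>] conds by (simp add: last)
    also have "xi_step\<^sup>*\<^sup>* \<dots>
        (plug (cond_ctxt \<sigma> f i (length cs) ls cs) (xi_top (subst \<sigma> (snd (last cs)))))"
      using False conds
      by (intro cs_step_rtrancl_ctxt active_cond_ctxt[OF index e fresh]) (auto simp: last Suc_leI)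
    also have "xi_step \<dots> (xi_top (subst \<sigma> r))"
      by (rule xi_step_last_condition[OF index e fresh False])
    finally show ?thesis .
  qed
qed

lemma xi_steps_condition:
  assumes rule: "(Fun f ls, r, cs) \<in> R" and n: "n < length cs"
    and conds: "\<forall>k<n.
      xi_step\<^sup>*\<^sup>* (xi_top (subst \<sigma> (fst (cs ! k)))) (xi_top (subst \<sigma> (snd (cs ! k))))"
  obtains C where "active_ctxt (mu_H ar) C"
    "xi_step\<^sup>+\<^sup>+ (xi_top (subst \<sigma> (Fun f ls))) (plug C (xi_top (subst \<sigma> (fst (cs ! n)))))"
proof -
  obtain i xs where index: "1 \<le> i" "i \<le> mcount enum f" and e: "enum f ! (i - 1) = (Fun f ls, r, cs)"
    and fresh: "distinct xs" "length xs = mcount enum f" "set xs \<inter> rule_vars (Fun f ls, r, cs) = {}"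
    by (rule rule_enum_index_fresh[OF rule])
  show ?thesis
  proof (rule that)
    show "active_ctxt (mu_H ar) (cond_ctxt \<sigma> f i (Suc n) ls cs)"
      using n by (intro active_cond_ctxt[OF index e fresh]) auto
  qed (rule xi_steps_conditions[OF index e fresh n conds])
qed

lemma wf_subst_rule_vars:
  assumes rule: "(Fun f ls, r, cs) \<in> R" and lhs: "wf_term ar (subst \<sigma> (Fun f ls))"
    and P: "\<And>x y. P x y \<Longrightarrow> wf_term ar x \<Longrightarrow> wf_term ar y"
    and n: "n \<le> length cs"
    and conds: "\<forall>j<n. P\<^sup>*\<^sup>* (subst \<sigma> (fst (cs ! j))) (subst \<sigma> (snd (cs ! j)))"
  shows "\<forall>x \<in> (\<Union>l\<in>set ls. vars l) \<union> (\<Union>b\<in>set (take n (map snd cs)). vars b). wf_term ar (\<sigma> x)"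
  using n conds
proof (induction n)
  case 0
  then show ?case using lhs by (simp add: wf_term_subst)
next
  case (Suc n)
  then have IH: "\<forall>x \<in> (\<Union>l\<in>set ls. vars l) \<union> (\<Union>b\<in>set (take n (map snd cs)). vars b).
      wf_term ar (\<sigma> x)"
    and n: "n < length cs" by auto
  have "wf_term ar (fst (cs ! n))" "wf_term ar (snd (cs ! n))"
    using cctrs_ruleD(4)[OF rule] nth_mem[OF n] by auto
  with IH cctrs_ruleD(6)[OF rule, rule_format, OF n] have "wf_term ar (subst \<sigma> (fst (cs ! n)))"
    by (auto simp: wf_term_subst)
  moreover have "P\<^sup>*\<^sup>* (subst \<sigma> (fst (cs ! n))) (subst \<sigma> (snd (cs ! n)))" using Suc.prems by simp
  ultimately have "wf_term ar (subst \<sigma> (snd (cs ! n)))"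
    by (metis (no_types, lifting) P rtranclp_induct)
  then have "\<forall>x\<in>vars (snd (cs ! n)). wf_term ar (\<sigma> x)" by (simp add: wf_term_subst)
  with IH n show ?case by (auto simp: take_Suc_conv_app_nth)
qed

lemma wf_subst_cond_lhs:
  assumes rule: "(Fun f ls, r, cs) \<in> R" and lhs: "wf_term ar (subst \<sigma> (Fun f ls))"
    and P: "\<And>x y. P x y \<Longrightarrow> wf_term ar x \<Longrightarrow> wf_term ar y"
    and k: "k < length cs"
    and conds: "\<forall>j<k. P\<^sup>*\<^sup>* (subst \<sigma> (fst (cs ! j))) (subst \<sigma> (snd (cs ! j)))"
  shows "wf_term ar (subst \<sigma> (fst (cs ! k)))"
proof -
  have "wf_term ar (fst (cs ! k))"
    using cctrs_ruleD(4)[OF rule] nth_mem[OF k] by auto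
  moreover have "\<forall>x \<in> (\<Union>l\<in>set ls. vars l) \<union> (\<Union>b\<in>set (take k (map snd cs)). vars b).
      wf_term ar (\<sigma> x)"
    by (rule wf_subst_rule_vars[OF rule lhs _ _ conds]) (use P k in auto)
  ultimately show ?thesis
    using cctrs_ruleD(6)[OF rule, rule_format, OF k] by (auto simp: wf_term_subst)
qed

lemma rstep_wf_term: "rstep R u v \<Longrightarrow> wf_term ar u \<Longrightarrow> wf_term ar v"
proof (induction rule: rstep.induct)
  case (1 l r cs \<sigma> C)
  obtain f ls where l: "l = Fun f ls" by (rule rule_lhs_Fun[OF 1(1)])
  with 1(1) have rule: "(Fun f ls, r, cs) \<in> R" by simp
  have "wf_term ar (subst \<sigma> (Fun f ls))" using 1(3) l by (blast dest: wf_term_plugD)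
  from wf_subst_rule_vars[OF rule this _ order_refl 1(2)] have
    "\<forall>x \<in> (\<Union>l\<in>set ls. vars l) \<union> (\<Union>b\<in>set (map snd cs). vars b). wf_term ar (\<sigma> x)"
    by auto
  with cctrs_ruleD(3,5)[OF rule] have "wf_term ar (subst \<sigma> r)" by (auto simp: wf_term_subst)
  with 1(3) show ?case by (rule wf_term_plug_replace)
qed

lemma rsteps_wf_term: "(rstep R)\<^sup>*\<^sup>* u v \<Longrightarrow> wf_term ar u \<Longrightarrow> wf_term ar v"
  by (induction rule: rtranclp_induct) (auto dest: rstep_wf_term)

lemma sqsup_wf_term:
  assumes "sqsup R u v" and u: "wf_term ar u"
  shows "wf_term ar v"
proof -
  from assms obtain C l r cs \<sigma> n where rule: "(l, r, cs) \<in> R" and n: "n < length cs"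
    and "u = plug C (subst \<sigma> l)" and v: "v = subst \<sigma> (fst (cs ! n))"
    and conds: "conds_hold R \<sigma> cs n"
    unfolding sqsup_def by blast
  moreover obtain f ls where "l = Fun f ls" by (rule rule_lhs_Fun[OF rule])
  ultimately show ?thesis
    using u wf_subst_cond_lhs[of f ls r cs \<sigma> "rstep R" n] rstep_wf_term
    by (blast dest: wf_term_plugD)
qed

lemma rstep_xi_steps: "rstep R u v \<Longrightarrow> wf_term ar u \<Longrightarrow> xi_step\<^sup>+\<^sup>+ (xi_top u) (xi_top v)"
proof (induction rule: rstep.induct)
  case (1 l r cs \<sigma> C)
  let ?P = "\<lambda>x y. rstep R x y \<and> (wf_term ar x \<longrightarrow> xi_step\<^sup>+\<^sup>+ (xi_top x) (xi_top y))"
  obtain f ls where l: "l = Fun f ls" by (rule rule_lhs_Fun[OF 1(1)])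
  with 1(1) have rule: "(Fun f ls, r, cs) \<in> R" by simp
  have lhs: "wf_term ar (subst \<sigma> (Fun f ls))" using 1(3) l by (blast dest: wf_term_plugD)
  have lift: "xi_step\<^sup>*\<^sup>* (xi_top x) (xi_top y) \<and> wf_term ar y"
    if "?P\<^sup>*\<^sup>* x y" "wf_term ar x" for x y
    using that by (induction rule: rtranclp_induct) (auto intro: rtranclp_trans dest: rstep_wf_term)
  have "xi_step\<^sup>*\<^sup>* (xi_top (subst \<sigma> (fst (cs ! k)))) (xi_top (subst \<sigma> (snd (cs ! k))))"
    if k: "k < length cs" for k
  proof -
    have "wf_term ar (subst \<sigma> (fst (cs ! k)))"
      by (rule wf_subst_cond_lhs[where P = ?P, OF rule lhs _ k]) (use 1(2) k rstep_wf_term in auto)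
    with 1(2) k lift show ?thesis by blast
  qed
  then have "xi_step\<^sup>+\<^sup>+ (xi_top (subst \<sigma> (Fun f ls))) (xi_top (subst \<sigma> r))"
    by (intro xi_steps_rule[OF rule]) blast
  from cs_step_trancl_ctxt[OF this active_xi_ctxt[OF 1(3)]] l show ?case
    by (simp add: xi_plug)
qed

lemma rsteps_xi_steps: "(rstep R)\<^sup>*\<^sup>* u v \<Longrightarrow> wf_term ar u \<Longrightarrow> xi_step\<^sup>*\<^sup>* (xi_top u) (xi_top v)"
proof (induction rule: rtranclp_induct)
  case (step y z)
  then have "xi_step\<^sup>+\<^sup>+ (xi_top y) (xi_top z)" using rstep_xi_steps rsteps_wf_term by blast
  with step show ?case by (meson rtranclp_trans tranclp_into_rtranclp)
qed simp

lemma sqsup_xi_steps: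
  assumes "sqsup R u v" and u: "wf_term ar u"
  obtains C where "active_ctxt (mu_H ar) C" "xi_step\<^sup>+\<^sup>+ (xi_top u) (plug C (xi_top v))"
proof -
  from assms obtain C l r cs \<sigma> n where rule': "(l, r, cs) \<in> R" and n: "n < length cs"
    and u_eq: "u = plug C (subst \<sigma> l)" and v: "v = subst \<sigma> (fst (cs ! n))"
    and conds: "conds_hold R \<sigma> cs n"
    unfolding sqsup_def by blast
  obtain f ls where l: "l = Fun f ls" by (rule rule_lhs_Fun[OF rule'])
  with rule' have rule: "(Fun f ls, r, cs) \<in> R" by simp
  have lhs: "wf_term ar (subst \<sigma> (Fun f ls))" using u u_eq l by (blast dest: wf_term_plugD)
  have "xi_step\<^sup>*\<^sup>* (xi_top (subst \<sigma> (fst (cs ! j)))) (xi_top (subst \<sigma> (snd (cs ! j))))"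
    if j: "j < n" for j
  proof (rule rsteps_xi_steps)
    show "(rstep R)\<^sup>*\<^sup>* (subst \<sigma> (fst (cs ! j))) (subst \<sigma> (snd (cs ! j)))" using conds j by blast
    show "wf_term ar (subst \<sigma> (fst (cs ! j)))"
      by (rule wf_subst_cond_lhs[where P = "rstep R", OF rule lhs rstep_wf_term])
        (use conds j n in auto)
  qed
  then obtain D where D: "active_ctxt (mu_H ar) D"
    "xi_step\<^sup>+\<^sup>+ (xi_top (subst \<sigma> (Fun f ls))) (plug D (xi_top v))"
    using xi_steps_condition[OF rule n] v by blast
  have C: "active_ctxt (mu_H ar) (xi_ctxt enum Top C)" using u u_eq by (blast intro: active_xi_ctxt)
  show ?thesis
  proof (rule that)
    show "active_ctxt (mu_H ar) (ctxt_comp (xi_ctxt enum Top C) D)"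
      using C D(1) by (rule active_ctxt_comp)
    show "xi_step\<^sup>+\<^sup>+ (xi_top u) (plug (ctxt_comp (xi_ctxt enum Top C) D) (xi_top v))"
      using cs_step_trancl_ctxt[OF D(2) C] u_eq l by (simp add: xi_plug)
  qed
qed

lemma zeta_lab: "zeta enum (lab R s) = xi_top s"
proof (induction s)
  case (Fun f ts)
  have "map (\<lambda>\<rho>. if \<rho> \<in> rules_of R f then hconst Top else hconst Bot) (enum f) =
      replicate (mcount enum f) (hconst Top)"
    using enumeration unfolding enumeration_def mcount_def
    by (simp add: map_replicate_const[symmetric] cong: map_cong)
  with Fun show ?case by (cases "defined R f") (simp_all add: mcount_constructor)
qed simp

lemma acc_qd_step_if_acc_xi_step:
  assumes "t \<in> Wellfounded.acc (xi_rel\<^sup>+)"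
    and "active_ctxt (mu_H ar) C" "wf_term ar s" "t = plug C (xi_top s)"
  shows "s \<in> Wellfounded.acc (qd_step R)"
  using assms
proof (induction arbitrary: C s rule: acc_induct_rule)
  case (1 t)
  show ?case
  proof (rule accI)
    fix s' assume "(s', s) \<in> qd_step R"
    then have step: "rstep R s s' \<or> sqsup R s s'" by (simp add: qd_step_def)
    obtain D where D: "active_ctxt (mu_H ar) D" "xi_step\<^sup>+\<^sup>+ (xi_top s) (plug D (xi_top s'))"
    proof (cases "rstep R s s'")
      case True
      with 1 show ?thesis using that[of Hole] rstep_xi_steps by simp
    next
      case False
      with step 1 show ?thesis using that sqsup_xi_steps by blast
    qed
    have "wf_term ar s'" using step 1 rstep_wf_term sqsup_wf_term by blast
    moreover have "(plug (ctxt_comp C D) (xi_top s'), t) \<in> xi_rel\<^sup>+"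
      using tranclp_imp_converse_trancl[OF cs_step_trancl_ctxt[OF D(2) 1(3)]] 1(5) by simp
    ultimately show "s' \<in> Wellfounded.acc (qd_step R)"
      using 1(2) active_ctxt_comp[OF 1(3) D(1)] by blast
  qed
qed

lemma quasi_decreasing_if_terminating:
  assumes "terminating_on xi_step {zeta enum s | s. wf_gterm ar R s}"
  shows "quasi_decreasing ar R"
  unfolding quasi_decreasing_def quasi_decreasing_term_iff_acc
proof (intro allI impI)
  fix s :: "('f, 'v) term" assume s: "wf_term ar s"
  have "zeta enum (lab R s) \<in> {zeta enum s | s. wf_gterm ar R s}"
    using wf_gterm_lab[OF s] by blast
  with assms have "xi_top s \<in> Wellfounded.acc xi_rel"
    unfolding terminating_on_iff_acc zeta_lab by blast
  from acc_qd_step_if_acc_xi_step[OF acc_trancl[OF this], of Hole] s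
  show "s \<in> Wellfounded.acc (qd_step R)" by simp
qed

end

section \<open>Projecting transformed terms\<close>

text \<open>\<open>\<bottom>\<close> and \<open>\<top>\<close> only occur in flag arguments, which are dropped; their image is junk.\<close>
fun proj :: "('f \<Rightarrow> nat) \<Rightarrow> ('f hsym, 'v) term \<Rightarrow> ('f, 'v) term" where
  "proj ar (Var x) = Var x"
| "proj ar (Fun (Orig f) ts) = Fun f (take (ar f) (map (proj ar) ts))"
| "proj ar (Fun (Aux f i j) ts) = Fun f (take (ar f) (map (proj ar) ts))"
| "proj ar (Fun Bot ts) = Fun undefined []"
| "proj ar (Fun Top ts) = Fun undefined []"

lemma proj_subst: "proj ar (subst \<sigma> t) = subst (proj ar \<circ> \<sigma>) (proj ar t)"
  by (induction ar t rule: proj.induct) (auto simp: take_map dest: in_set_takeD)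

lemma proj_emb: "wf_term ar u \<Longrightarrow> proj ar (emb u) = u"
  by (induction u) (auto simp: map_idI)

lemma proj_xi: "wf_term ar u \<Longrightarrow> proj ar (xi enum st u) = u"
  by (induction u) (auto simp: map_idI)

lemma proj_emb_args:
  assumes "length ls = ar f" "\<forall>l\<in>set ls. wf_term ar l" "g = Orig f \<or> g = Aux f i j"
  shows "proj ar (Fun g (map emb ls @ rest)) = Fun f ls"
proof -
  have "map (proj ar \<circ> emb) ls = ls" using assms(2) by (simp add: map_idI proj_emb)
  with assms show ?thesis by auto
qed

fun no_aux :: "('f hsym, 'v) term \<Rightarrow> bool" where
  "no_aux (Var x) = True"
| "no_aux (Fun g ts) = ((\<forall>t\<in>set ts. no_aux t) \<and> (case g of Aux _ _ _ \<Rightarrow> False | _ \<Rightarrow> True))"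

lemma no_aux_emb [simp]: "no_aux (emb u)"
  by (induction u) auto

lemma no_aux_xi [simp]: "st = Top \<or> st = Bot \<Longrightarrow> no_aux (xi enum st u)"
  by (induction u) auto

lemma no_aux_zeta: "no_aux (zeta enum s)"
  by (induction enum s rule: zeta.induct) auto

lemma ap_no_aux: "ap ar R enum u v \<Longrightarrow> no_aux v"
  by (induction rule: ap.induct) (auto dest: in_set_takeD in_set_dropD simp: nth_append)

lemma wf_term_proj_zeta: "wf_gterm ar R s \<Longrightarrow> wf_term ar (proj ar (zeta enum s))"
  by (induction enum s rule: zeta.induct) auto

definition count_top :: "('f hsym, 'v) term list \<Rightarrow> nat" where
  "count_top ts = length (filter (\<lambda>t. t = hconst Top) ts)"

lemma count_top_simps [simp]:
  "count_top [] = 0" "count_top (xs @ ys) = count_top xs + count_top ys"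
  "count_top (hconst Top # xs) = Suc (count_top xs)" "count_top (hconst Bot # xs) = count_top xs"
  by (auto simp: count_top_def)

text \<open>At the root, the rules still flagged \<open>\<top>\<close> (other than the one whose conditions are being
  evaluated), then the number of conditions still to be evaluated.\<close>
fun flag_measure :: "('f \<Rightarrow> nat) \<Rightarrow> ('f \<Rightarrow> ('f, 'v) crule list) \<Rightarrow> ('f hsym, 'v) term \<Rightarrow> nat \<times> nat" where
  "flag_measure ar enum (Fun (Orig f) ts) = (count_top (drop (ar f) ts), 0)"
| "flag_measure ar enum (Fun (Aux f i j) ts) =
    (count_top (take (i - 1) (drop (ar f) ts)) + count_top (drop (ar f + (i - 1) + j) ts),
     Suc (length (snd (snd (enum f ! (i - 1)))) - j))"
| "flag_measure ar enum _ = (0, 0)"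

abbreviation flag_order :: "((nat \<times> nat) \<times> (nat \<times> nat)) set" where
  "flag_order \<equiv> less_than <*lex*> less_than"

fun active_args :: "('f \<Rightarrow> nat) \<Rightarrow> ('f hsym, 'v) term \<Rightarrow> ('f hsym, 'v) term list" where
  "active_args ar (Fun (Orig f) ts) = take (ar f) ts"
| "active_args ar (Fun (Aux f i j) ts) = [ts ! (ar f + i + j - 2)]"
| "active_args ar _ = []"

lemma flag_measure_Aux_ins:
  assumes "length ls = ar f" "length xs = m" "1 \<le> i" "i \<le> m" "length us = j"
  shows "flag_measure ar enum (Fun (Aux f i j) (map (subst \<sigma>) (map emb ls @ ins xs i us))) =
    (count_top (map \<sigma> (take (i - 1) xs)) + count_top (map \<sigma> (drop i xs)),
     Suc (length (snd (snd (enum f ! (i - 1)))) - j))"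
  using assms by (simp add: map_subst_ins)

lemma flag_measure_Orig_ins:
  assumes "length ps = ar f" "length xs = m" "1 \<le> i" "i \<le> m"
  shows "flag_measure ar enum (Fun (Orig f) (map (subst \<sigma>) (ps @ ins xs i [hconst c]))) =
    (count_top (map \<sigma> (take (i - 1) xs)) + count_top [hconst c] + count_top (map \<sigma> (drop i xs)), 0)"
  using assms by (simp add: map_subst_ins count_top_def)

lemma arg_step_Orig:
  assumes t: "t = Fun (Orig f) (ss @ u # ts)" and t': "t' = Fun (Orig f) (ss @ u' # ts)"
    and pos: "length ss < ar f"
  shows "flag_measure ar enum t' = flag_measure ar enum t"
    and "proj ar u' = proj ar u \<or> rstep R (proj ar u) (proj ar u') \<Longrightarrow>
      proj ar t' = proj ar t \<or> rstep R (proj ar t) (proj ar t')"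
    and "(u', u) \<in> S \<Longrightarrow> (active_args ar t', active_args ar t) \<in> listrel1 S"
proof -
  have take_args: "take (ar f) (ss @ x # ts) = ss @ x # take (ar f - Suc (length ss)) ts"
    for x :: "('a hsym, 'b) term"
    using pos by (simp add: take_Cons')
  show "flag_measure ar enum t' = flag_measure ar enum t"
    using pos by (simp add: t t' drop_Cons')
  show "proj ar t' = proj ar t \<or> rstep R (proj ar t) (proj ar t')"
    if "proj ar u' = proj ar u \<or> rstep R (proj ar u) (proj ar u')"
  proof -
    have "proj ar (Fun (Orig f) (ss @ x # ts)) =
        Fun f (map (proj ar) ss @ proj ar x # take (ar f - Suc (length ss)) (map (proj ar) ts))"
      for x
      using pos by (simp add: take_Cons')
    with that show ?thesis unfolding t t' by (auto intro: rstep_arg)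
  qed
  show "(active_args ar t', active_args ar t) \<in> listrel1 S" if "(u', u) \<in> S"
    using that unfolding t t' by (simp only: active_args.simps take_args) (rule listrel1I, auto)
qed

context transformed_cctrs
begin

text \<open>The arguments of \<open>f\<^sub>i\<^sup>j\<close> record a partial evaluation of the conditions of the
  \<open>i\<close>-th rule of \<open>f\<close>: under the projected matcher the first \<open>j - 1\<close> conditions hold, and
  the left-hand side of the \<open>j\<close>-th one rewrites to the projection of the argument being evaluated.\<close>
definition valid_cond_args :: "'f \<Rightarrow> nat \<Rightarrow> nat \<Rightarrow> ('f hsym, 'v) term list \<Rightarrow> bool" where
  "valid_cond_args f i j ts \<longleftrightarrow> (\<exists>ls r cs \<sigma> pre c post. 1 \<le> i \<and> i \<le> mcount enum f \<and>
    enum f ! (i - 1) = (Fun f ls, r, cs) \<and> 1 \<le> j \<and> j \<le> length cs \<and>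
    length pre = i - 1 \<and> length post = mcount enum f - i \<and>
    ts = map (subst \<sigma> \<circ> emb) ls @ pre @ map (subst \<sigma> \<circ> emb \<circ> snd) (take (j - 1) cs) @ c # post \<and>
    (conds_hold R (proj ar \<circ> \<sigma>) cs (j - 1)) \<and>
    (rstep R)\<^sup>*\<^sup>* (subst (proj ar \<circ> \<sigma>) (fst (cs ! (j - 1)))) (proj ar c))"

fun valid :: "('f hsym, 'v) term \<Rightarrow> bool" where
  "valid (Var x) = True"
| "valid (Fun g ts) = ((\<forall>t\<in>set ts. valid t) \<and>
     (case g of Aux f i j \<Rightarrow> valid_cond_args f i j ts | _ \<Rightarrow> True))"

lemma valid_no_aux: "no_aux t \<Longrightarrow> valid t"
proof (induction t)
  case (Fun g ts) then show ?case by (cases g) auto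
qed simp

lemma valid_subst_no_aux: "no_aux t \<Longrightarrow> (\<forall>x\<in>vars t. valid (\<sigma> x)) \<Longrightarrow> valid (subst \<sigma> t)"
proof (induction t)
  case (Fun g ts) then show ?case by (cases g) auto
qed simp

lemma valid_subst_var: "valid (subst \<sigma> t) \<Longrightarrow> x \<in> vars t \<Longrightarrow> valid (\<sigma> x)"
  by (induction t) auto

lemma valid_cond_argsE:
  assumes "valid_cond_args f i j ts"
  obtains ls r cs \<sigma> pre c post where "1 \<le> i" "i \<le> mcount enum f"
    "enum f ! (i - 1) = (Fun f ls, r, cs)" "1 \<le> j" "j \<le> length cs"
    "length pre = i - 1" "length post = mcount enum f - i"
    "ts = map (subst \<sigma> \<circ> emb) ls @ pre @ map (subst \<sigma> \<circ> emb \<circ> snd) (take (j - 1) cs) @ c # post"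
    "conds_hold R (proj ar \<circ> \<sigma>) cs (j - 1)"
    "(rstep R)\<^sup>*\<^sup>* (subst (proj ar \<circ> \<sigma>) (fst (cs ! (j - 1)))) (proj ar c)"
    "length ls = ar f" "\<forall>l\<in>set ls. wf_term ar l"
proof -
  from assms obtain ls r cs \<sigma> pre c post where *: "1 \<le> i" "i \<le> mcount enum f"
    "enum f ! (i - 1) = (Fun f ls, r, cs)" "1 \<le> j" "j \<le> length cs"
    "length pre = i - 1" "length post = mcount enum f - i"
    "ts = map (subst \<sigma> \<circ> emb) ls @ pre @ map (subst \<sigma> \<circ> emb \<circ> snd) (take (j - 1) cs) @ c # post"
    "conds_hold R (proj ar \<circ> \<sigma>) cs (j - 1)"
    "(rstep R)\<^sup>*\<^sup>* (subst (proj ar \<circ> \<sigma>) (fst (cs ! (j - 1)))) (proj ar c)"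
    unfolding valid_cond_args_def by blast
  moreover have "(Fun f ls, r, cs) \<in> R" using enum_nth_rule(1)[OF *(1-3)] .
  ultimately show ?thesis using that cctrs_ruleD(1,2) by blast
qed

lemma valid_cond_args_conds:
  assumes valid: "valid_cond_args f i j
      (map (subst \<sigma>) (map emb ls @ ins xs i (map (emb \<circ> snd) (take (j - 1) cs) @ [u])))"
    and rule: "enum f ! (i - 1) = (Fun f ls, r, cs)" and xs: "length xs = mcount enum f"
  shows "conds_hold R (proj ar \<circ> \<sigma>) cs (j - 1)"
    and "(rstep R)\<^sup>*\<^sup>* (subst (proj ar \<circ> \<sigma>) (fst (cs ! (j - 1)))) (proj ar (subst \<sigma> u))"
proof -
  from valid obtain ls' r' cs' \<sigma>' pre c post where index: "1 \<le> i" "i \<le> mcount enum f"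
    and rule': "enum f ! (i - 1) = (Fun f ls', r', cs')" and j: "1 \<le> j" "j \<le> length cs'"
    and pre: "length pre = i - 1"
    and args: "map (subst \<sigma>) (map emb ls @ ins xs i (map (emb \<circ> snd) (take (j - 1) cs) @ [u])) =
      map (subst \<sigma>' \<circ> emb) ls' @ pre @ map (subst \<sigma>' \<circ> emb \<circ> snd) (take (j - 1) cs') @ c # post"
    and conds: "conds_hold R (proj ar \<circ> \<sigma>') cs' (j - 1)"
    and last: "(rstep R)\<^sup>*\<^sup>* (subst (proj ar \<circ> \<sigma>') (fst (cs' ! (j - 1)))) (proj ar c)"
    by (rule valid_cond_argsE)
  from rule rule' have [simp]: "ls' = ls" "cs' = cs" by simp_all
  define us where "us = map emb ls @ map (emb \<circ> snd) (take (j - 1) cs)"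
  from args have "map (subst \<sigma>' \<circ> emb) ls = map (subst \<sigma> \<circ> emb) ls" and
    rest: "map \<sigma> (take (i - 1) xs) @ map (subst \<sigma> \<circ> emb \<circ> snd) (take (j - 1) cs) @
        subst \<sigma> u # map \<sigma> (drop i xs) =
      pre @ map (subst \<sigma>' \<circ> emb \<circ> snd) (take (j - 1) cs) @ c # post"
    by (simp_all add: map_subst_ins append_eq_append_conv comp_assoc)
  moreover from rest pre index xs
  have "map (subst \<sigma>' \<circ> emb \<circ> snd) (take (j - 1) cs) = map (subst \<sigma> \<circ> emb \<circ> snd) (take (j - 1) cs)"
    and c: "c = subst \<sigma> u"
    by (simp_all add: append_eq_append_conv)
  ultimately have "map (subst \<sigma>') us = map (subst \<sigma>) us" by (simp add: us_def)
  then have same: "subst (proj ar \<circ> \<sigma>') t = subst (proj ar \<circ> \<sigma>) t"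
    if "vars t \<subseteq> (\<Union>u\<in>set us. vars u)" for t
    using that by (rule subst_eq_on_covered_vars)
  have cover: "(\<Union>u\<in>set us. vars u) =
      (\<Union>l\<in>set ls. vars l) \<union> (\<Union>b\<in>set (take (j - 1) (map snd cs)). vars b)"
    by (auto simp: us_def take_map)
  have lhs_vars: "vars (fst (cs ! k)) \<subseteq> (\<Union>u\<in>set us. vars u)" if "k \<le> j - 1" for k
  proof -
    have "k < length cs" using that j by simp
    then have "vars (fst (cs ! k)) \<subseteq> (\<Union>l\<in>set ls. vars l) \<union> (\<Union>b\<in>set (take k (map snd cs)). vars b)"
      using cctrs_ruleD(6)[OF enum_nth_rule(1)[OF index rule]] by blast
    also have "\<dots> \<subseteq> (\<Union>l\<in>set ls. vars l) \<union> (\<Union>b\<in>set (take (j - 1) (map snd cs)). vars b)"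
      using set_take_subset_set_take[OF that, of "map snd cs"] by blast
    finally show ?thesis unfolding cover .
  qed
  have rhs_vars: "vars (snd (cs ! k)) \<subseteq> (\<Union>u\<in>set us. vars u)" if "k < j - 1" for k
  proof -
    have "take (j - 1) (map snd cs) ! k = snd (cs ! k)" "k < length (take (j - 1) (map snd cs))"
      using that j by simp_all
    then have "snd (cs ! k) \<in> set (take (j - 1) (map snd cs))" by (metis nth_mem)
    then show ?thesis unfolding cover by blast
  qed
  show "conds_hold R (proj ar \<circ> \<sigma>) cs (j - 1)"
    using conds same lhs_vars rhs_vars by (metis \<open>cs' = cs\<close> less_imp_le_nat)
  show "(rstep R)\<^sup>*\<^sup>* (subst (proj ar \<circ> \<sigma>) (fst (cs ! (j - 1)))) (proj ar (subst \<sigma> u))"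
    using last same[OF lhs_vars[OF order_refl]] c by simp
qed

lemma proj_subst_emb_args:
  assumes "(Fun f ls, r, cs) \<in> R" "g = Orig f \<or> g = Aux f i j"
  shows "proj ar (subst \<sigma> (Fun g (map emb ls @ rest))) = subst (proj ar \<circ> \<sigma>) (Fun f ls)"
proof -
  have "\<forall>l\<in>set ls. wf_term ar l" using cctrs_ruleD(2)[OF assms(1)] by blast
  from proj_emb_args[OF cctrs_ruleD(1)[OF assms(1)] this assms(2)] show ?thesis
    by (simp only: proj_subst)
qed

lemma valid_subst_no_aux_rhs:
  "valid (subst \<sigma> l) \<Longrightarrow> no_aux r \<Longrightarrow> vars r \<subseteq> vars l \<Longrightarrow> valid (subst \<sigma> r)"
  by (meson subsetD valid_subst_no_aux valid_subst_var)

lemma valid_cond_args_intro: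
  assumes index: "1 \<le> i" "i \<le> mcount enum f" and rule: "enum f ! (i - 1) = (Fun f ls, r, cs)"
    and j: "1 \<le> j" "j \<le> length cs" and xs: "length xs = mcount enum f"
    and conds: "conds_hold R (proj ar \<circ> \<sigma>) cs (j - 1)"
  shows "valid_cond_args f i j (map (subst \<sigma>)
    (map emb ls @ ins xs i (map (emb \<circ> snd) (take (j - 1) cs) @ [xi_top (fst (cs ! (j - 1)))])))"
proof -
  have "wf_term ar (fst (cs ! (j - 1)))"
    using cctrs_ruleD(4)[OF enum_nth_rule(1)[OF index rule]] j by simp
  then have "proj ar (subst \<sigma> (xi_top (fst (cs ! (j - 1))))) =
      subst (proj ar \<circ> \<sigma>) (fst (cs ! (j - 1)))"
    by (simp add: proj_subst proj_xi)
  then show ?thesis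
    unfolding valid_cond_args_def using index rule j xs conds
    by (intro exI[of _ ls] exI[of _ r] exI[of _ cs] exI[of _ \<sigma>] exI[of _ "map \<sigma> (take (i - 1) xs)"]
        exI[of _ "subst \<sigma> (xi_top (fst (cs ! (j - 1))))"] exI[of _ "map \<sigma> (drop i xs)"])
      (simp add: map_subst_ins)
qed

lemma valid_cond_args_all_conds:
  assumes valid: "valid_cond_args f i j
      (map (subst \<sigma>) (map emb ls @ ins xs i (map (emb \<circ> snd) (take j cs))))"
    and index: "1 \<le> i" "i \<le> mcount enum f" and rule: "enum f ! (i - 1) = (Fun f ls, r, cs)"
    and xs: "length xs = mcount enum f" and j: "1 \<le> j" "j \<le> length cs"
  shows "conds_hold R (proj ar \<circ> \<sigma>) cs j"
proof (intro allI impI)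
  fix k assume "k < j"
  have "take (Suc (j - 1)) cs = take (j - 1) cs @ [cs ! (j - 1)]"
    using j by (intro take_Suc_conv_app_nth) simp
  then have "take j cs = take (j - 1) cs @ [cs ! (j - 1)]" using j by simp
  with valid have "valid_cond_args f i j (map (subst \<sigma>)
      (map emb ls @ ins xs i (map (emb \<circ> snd) (take (j - 1) cs) @ [emb (snd (cs ! (j - 1)))])))"
    by simp
  note conds = valid_cond_args_conds[OF this rule xs]
  have "wf_term ar (snd (cs ! (j - 1)))"
    using cctrs_ruleD(4)[OF enum_nth_rule(1)[OF index rule]] j by simp
  with conds(2) have last: "(rstep R)\<^sup>*\<^sup>* (subst (proj ar \<circ> \<sigma>) (fst (cs ! (j - 1))))
      (subst (proj ar \<circ> \<sigma>) (snd (cs ! (j - 1))))"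
    by (simp add: proj_subst proj_emb)
  from \<open>k < j\<close> consider "k < j - 1" | "k = j - 1" by linarith
  then show "(rstep R)\<^sup>*\<^sup>* (subst (proj ar \<circ> \<sigma>) (fst (cs ! k)))
      (subst (proj ar \<circ> \<sigma>) (snd (cs ! k)))"
  proof cases
    case 1
    with conds(1) show ?thesis by blast
  next
    case 2
    with last show ?thesis by simp
  qed
qed

lemma valid_root_step:
  assumes "(lhs, rhs) \<in> Xi ar R enum" and valid_lhs: "valid (subst \<sigma> lhs)"
  shows "valid (subst \<sigma> rhs)"
  using assms(1)
proof cases
  case (xi1 i f ls r cs xs)
  then show ?thesis
    using cctrs_ruleD(5)[OF enum_nth_rule(1)[OF xi1(3-5)]]
    by (intro valid_subst_no_aux_rhs[OF valid_lhs]) (auto simp: ins_def)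
next
  case (xi2 i f ls r cs xs)
  note rule = enum_nth_rule(1)[OF xi2(3-5)]
  have "vars (fst (cs ! 0)) \<subseteq> (\<Union>l\<in>set ls. vars l)"
    using cctrs_ruleD(6)[OF rule, rule_format, of 0] xi2(9) by simp
  then have "\<forall>t \<in> set (map emb ls @ ins xs i [xi_top (fst (cs ! 0))]). valid (subst \<sigma> t)"
    using xi2 by (intro ballI valid_subst_no_aux_rhs[OF valid_lhs])
      (auto simp: ins_def dest: in_set_takeD in_set_dropD)
  moreover have "valid_cond_args f i 1
      (map (subst \<sigma>) (map emb ls @ ins xs i [xi_top (fst (cs ! 0))]))"
    using valid_cond_args_intro[OF xi2(3-5), of 1 xs \<sigma>] xi2 by (simp add: Suc_leI)
  ultimately show ?thesis using xi2(2) by auto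
next
  case (xi3 i f ls r cs xs)
  then show ?thesis
    using cctrs_ruleD(5)[OF enum_nth_rule(1)[OF xi3(3-5)]]
    by (intro valid_subst_no_aux_rhs[OF valid_lhs]) (auto simp: ins_def)
next
  case (xi4 i f ls r cs xs j)
  note rule = enum_nth_rule(1)[OF xi4(3-5)]
  have "vars (fst (cs ! j)) \<subseteq> (\<Union>l\<in>set ls. vars l) \<union> (\<Union>b \<in> set (take j (map snd cs)). vars b)"
    using cctrs_ruleD(6)[OF rule, rule_format, of j] xi4(10) by simp
  then have "\<forall>t \<in> set (map emb ls @
      ins xs i (map (emb \<circ> snd) (take j cs) @ [xi_top (fst (cs ! j))])). valid (subst \<sigma> t)"
    using xi4 by (intro ballI valid_subst_no_aux_rhs[OF valid_lhs]) (auto simp: ins_def take_map)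
  moreover have "valid_cond_args f i (Suc j) (map (subst \<sigma>)
      (map emb ls @ ins xs i (map (emb \<circ> snd) (take j cs) @ [xi_top (fst (cs ! j))])))"
    using valid_cond_args_intro[OF xi4(3-5), of "Suc j" xs \<sigma>] xi4
      valid_cond_args_all_conds[of f i j \<sigma> ls xs cs, OF _ xi4(3-5,7)] valid_lhs
    by simp
  ultimately show ?thesis using xi4(2) by auto
next
  case (xi5 i f ls r cs xs j v)
  then show ?thesis by (intro valid_subst_no_aux_rhs[OF valid_lhs]) (auto simp: ins_def)
next
  case (xi6 i f ls r cs xs ys j v)
  then show ?thesis
    by (intro valid_subst_no_aux_rhs[OF valid_lhs]) (auto simp: ins_def dest: ap_no_aux)
qed

lemma proj_root_step:
  assumes "(lhs, rhs) \<in> Xi ar R enum" and valid_lhs: "valid (subst \<sigma> lhs)"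
  shows "rstep R (proj ar (subst \<sigma> lhs)) (proj ar (subst \<sigma> rhs)) \<or>
    proj ar (subst \<sigma> rhs) = proj ar (subst \<sigma> lhs) \<and>
    (flag_measure ar enum (subst \<sigma> rhs), flag_measure ar enum (subst \<sigma> lhs)) \<in> flag_order"
  (is "_ \<or> _ \<and> ?decreases")
  using assms(1)
proof cases
  case (xi1 i f ls r cs xs)
  note rule = enum_nth_rule(1)[OF xi1(3-5)]
  have "proj ar (subst \<sigma> rhs) = subst (proj ar \<circ> \<sigma>) r"
    using xi1(2) cctrs_ruleD(3)[OF rule] by (simp add: proj_subst proj_xi)
  moreover have "rstep R (subst (proj ar \<circ> \<sigma>) (Fun f ls)) (subst (proj ar \<circ> \<sigma>) r)"
    using rstep_root[OF rule] xi1(9) by simp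
  moreover have "proj ar (subst \<sigma> lhs) = subst (proj ar \<circ> \<sigma>) (Fun f ls)"
    unfolding xi1(1) by (rule proj_subst_emb_args[OF rule]) simp
  ultimately show ?thesis by simp
next
  case (xi2 i f ls r cs xs)
  note rule = enum_nth_rule(1)[OF xi2(3-5)]
  have "proj ar (subst \<sigma> lhs) = subst (proj ar \<circ> \<sigma>) (Fun f ls)"
    unfolding xi2(1) by (rule proj_subst_emb_args[OF rule]) simp
  moreover have "proj ar (subst \<sigma> rhs) = subst (proj ar \<circ> \<sigma>) (Fun f ls)"
    unfolding xi2(2) by (rule proj_subst_emb_args[OF rule]) simp
  moreover have ?decreases
    using xi2 cctrs_ruleD(1)[OF rule]
      flag_measure_Aux_ins[of ls ar f xs "mcount enum f" i "[xi_top (fst (cs ! 0))]" 1 enum \<sigma>]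
      flag_measure_Orig_ins[of "map emb ls" ar f xs "mcount enum f" i enum \<sigma> Top]
    by simp
  ultimately show ?thesis by simp
next
  case (xi3 i f ls r cs xs)
  note rule = enum_nth_rule(1)[OF xi3(3-5)]
  have "valid_cond_args f i (length cs)
      (map (subst \<sigma>) (map emb ls @ ins xs i (map (emb \<circ> snd) (take (length cs) cs))))"
    using valid_lhs xi3(1) by simp
  from valid_cond_args_all_conds[OF this xi3(3-5,7)] xi3(9)
  have "rstep R (subst (proj ar \<circ> \<sigma>) (Fun f ls)) (subst (proj ar \<circ> \<sigma>) r)"
    by (intro rstep_root[OF rule]) (simp add: Suc_leI)
  moreover have "proj ar (subst \<sigma> rhs) = subst (proj ar \<circ> \<sigma>) r"
    using xi3(2) cctrs_ruleD(3)[OF rule] by (simp add: proj_subst proj_xi)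
  moreover have "proj ar (subst \<sigma> lhs) = subst (proj ar \<circ> \<sigma>) (Fun f ls)"
    unfolding xi3(1) by (rule proj_subst_emb_args[OF rule]) simp
  ultimately show ?thesis by simp
next
  case (xi4 i f ls r cs xs j)
  note rule = enum_nth_rule(1)[OF xi4(3-5)]
  have "proj ar (subst \<sigma> lhs) = subst (proj ar \<circ> \<sigma>) (Fun f ls)"
    unfolding xi4(1) by (rule proj_subst_emb_args[OF rule]) simp
  moreover have "proj ar (subst \<sigma> rhs) = subst (proj ar \<circ> \<sigma>) (Fun f ls)"
    unfolding xi4(2) by (rule proj_subst_emb_args[OF rule]) simp
  moreover have ?decreases
    using xi4 cctrs_ruleD(1)[OF rule]
      flag_measure_Aux_ins[of ls ar f xs "mcount enum f" i
        "map (emb \<circ> snd) (take j cs) @ [xi_top (fst (cs ! j))]" "Suc j" enum \<sigma>]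
      flag_measure_Aux_ins[of ls ar f xs "mcount enum f" i "map (emb \<circ> snd) (take j cs)" j enum \<sigma>]
    by simp
  ultimately show ?thesis by simp
next
  case (xi5 i f ls r cs xs j v)
  note rule = enum_nth_rule(1)[OF xi5(3-5)]
  have "proj ar (subst \<sigma> lhs) = subst (proj ar \<circ> \<sigma>) (Fun f ls)"
    unfolding xi5(1) by (rule proj_subst_emb_args[OF rule]) simp
  moreover have "proj ar (subst \<sigma> rhs) = subst (proj ar \<circ> \<sigma>) (Fun f ls)"
    unfolding xi5(2) by (rule proj_subst_emb_args[OF rule]) simp
  moreover have ?decreases
    using xi5 cctrs_ruleD(1)[OF rule]
      flag_measure_Aux_ins[of ls ar f xs "mcount enum f" i
        "map (emb \<circ> snd) (take (j - 1) cs) @ [v]" j enum \<sigma>]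
      flag_measure_Orig_ins[of "map emb ls" ar f xs "mcount enum f" i enum \<sigma> Bot]
    by simp
  ultimately show ?thesis by simp
next
  case (xi6 i f ls r cs xs ys j v)
  note rule = enum_nth_rule(1)[OF xi6(3-5)]
  have len: "length (ins ys j [v]) = ar f" using xi6 cctrs_ruleD(1)[OF rule] by (simp add: ins_def)
  then have "proj ar (subst \<sigma> rhs) = proj ar (subst \<sigma> lhs)" using xi6(1,2) by simp
  moreover have ?decreases
    using xi6 len flag_measure_Orig_ins[of "ins ys j [v]" ar f xs "mcount enum f" i enum \<sigma> Bot]
      flag_measure_Orig_ins[of "ins ys j [v]" ar f xs "mcount enum f" i enum \<sigma> Top]
    by simp
  ultimately show ?thesis by simp
qed

lemma valid_cond_args_arg_position:
  assumes "valid_cond_args f i j (ss @ u # ts)" "length ss = ar f + i + j - 2"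
  obtains ls r cs \<sigma> where "1 \<le> i" "1 \<le> j" "enum f ! (i - 1) = (Fun f ls, r, cs)" "j \<le> length cs"
    "conds_hold R (proj ar \<circ> \<sigma>) cs (j - 1)"
    "(rstep R)\<^sup>*\<^sup>* (subst (proj ar \<circ> \<sigma>) (fst (cs ! (j - 1)))) (proj ar u)"
    "\<And>x. drop (ar f + (i - 1) + j) (ss @ x # ts) = ts" "ar f + (i - 1) \<le> length ss"
    "\<And>u'. (rstep R)\<^sup>*\<^sup>* (subst (proj ar \<circ> \<sigma>) (fst (cs ! (j - 1)))) (proj ar u') \<Longrightarrow>
       valid_cond_args f i j (ss @ u' # ts)"
proof -
  obtain ls r cs \<sigma> pre c post where index: "1 \<le> i" "i \<le> mcount enum f"
    and rule: "enum f ! (i - 1) = (Fun f ls, r, cs)" and j: "1 \<le> j" "j \<le> length cs"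
    and pre: "length pre = i - 1" and post: "length post = mcount enum f - i"
    and args: "ss @ u # ts =
      map (subst \<sigma> \<circ> emb) ls @ pre @ map (subst \<sigma> \<circ> emb \<circ> snd) (take (j - 1) cs) @ c # post"
    and conds: "conds_hold R (proj ar \<circ> \<sigma>) cs (j - 1)"
    and last: "(rstep R)\<^sup>*\<^sup>* (subst (proj ar \<circ> \<sigma>) (fst (cs ! (j - 1)))) (proj ar c)"
    and ls: "length ls = ar f"
    using assms(1) by (rule valid_cond_argsE)
  define A where "A = map (subst \<sigma> \<circ> emb) ls @ pre @ map (subst \<sigma> \<circ> emb \<circ> snd) (take (j - 1) cs)"
  have "length A = length ss" using assms(2) index ls pre j by (simp add: A_def)
  moreover from args have "ss @ u # ts = A @ c # post" by (simp add: A_def)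
  ultimately have ss: "ss = A" and "u = c" and "ts = post" by (simp_all add: append_eq_append_conv)
  show ?thesis
  proof (rule that[OF index(1) j(1) rule j(2) conds])
    show "(rstep R)\<^sup>*\<^sup>* (subst (proj ar \<circ> \<sigma>) (fst (cs ! (j - 1)))) (proj ar u)"
      using last \<open>u = c\<close> by simp
    show "drop (ar f + (i - 1) + j) (ss @ x # ts) = ts" for x
      using assms(2) index j by simp
    show "ar f + (i - 1) \<le> length ss"
      using assms(2) index j by simp
    show "valid_cond_args f i j (ss @ u' # ts)"
      if "(rstep R)\<^sup>*\<^sup>* (subst (proj ar \<circ> \<sigma>) (fst (cs ! (j - 1)))) (proj ar u')" for u'
      unfolding valid_cond_args_def using index rule j pre post conds that ss \<open>ts = post\<close>
      by (intro exI[of _ ls] exI[of _ r] exI[of _ cs] exI[of _ \<sigma>] exI[of _ pre] exI[of _ u']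
          exI[of _ post]) (simp add: A_def)
  qed
qed

lemma arg_step_Aux:
  assumes t: "t = Fun (Aux f i j) (ss @ u # ts)" and t': "t' = Fun (Aux f i j) (ss @ u' # ts)"
    and valid: "valid_cond_args f i j (ss @ u # ts)" and pos: "length ss = ar f + i + j - 2"
  shows "proj ar u' = proj ar u \<or> rstep R (proj ar u) (proj ar u') \<Longrightarrow>
      valid_cond_args f i j (ss @ u' # ts)"
    and "flag_measure ar enum t' = flag_measure ar enum t"
    and "proj ar t' = proj ar t"
    and "(u', u) \<in> S \<Longrightarrow> (active_args ar t', active_args ar t) \<in> listrel1 S"
proof -
  obtain ls r cs \<sigma> where "1 \<le> i" "1 \<le> j" "enum f ! (i - 1) = (Fun f ls, r, cs)" "j \<le> length cs"
    "conds_hold R (proj ar \<circ> \<sigma>) cs (j - 1)"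
    and last: "(rstep R)\<^sup>*\<^sup>* (subst (proj ar \<circ> \<sigma>) (fst (cs ! (j - 1)))) (proj ar u)"
    and tail: "\<And>x. drop (ar f + (i - 1) + j) (ss @ x # ts) = ts"
    and before: "ar f + (i - 1) \<le> length ss"
    and replace: "\<And>u'. (rstep R)\<^sup>*\<^sup>* (subst (proj ar \<circ> \<sigma>) (fst (cs ! (j - 1)))) (proj ar u') \<Longrightarrow>
       valid_cond_args f i j (ss @ u' # ts)"
    using valid_cond_args_arg_position[OF valid pos] by blast
  show "valid_cond_args f i j (ss @ u' # ts)"
    if "proj ar u' = proj ar u \<or> rstep R (proj ar u) (proj ar u')"
    using that last by (auto intro: replace rtranclp.rtrancl_into_rtrancl)
  show "flag_measure ar enum t' = flag_measure ar enum t"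
    using before unfolding t t' by (simp only: flag_measure.simps tail) simp
  show "proj ar t' = proj ar t"
    using before unfolding t t' by simp
  show "(active_args ar t', active_args ar t) \<in> listrel1 S" if "(u', u) \<in> S"
    using that pos[symmetric] unfolding t t' by (simp add: listrel1I1)
qed

lemma arg_step:
  assumes t: "t = Fun g (ss @ u # ts)" and t': "t' = Fun g (ss @ u' # ts)"
    and valid: "valid t" and pos: "Suc (length ss) \<in> mu_H ar g"
    and valid_u': "valid u'" and step: "proj ar u' = proj ar u \<or> rstep R (proj ar u) (proj ar u')"
  shows "valid t'"
    and "flag_measure ar enum t' = flag_measure ar enum t"
    and "proj ar t' = proj ar t \<or> rstep R (proj ar t) (proj ar t')"
    and "(u', u) \<in> S \<Longrightarrow> (active_args ar t', active_args ar t) \<in> listrel1 S"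
proof -
  consider (Orig) f where "g = Orig f" "length ss < ar f"
    | (Aux) f i j where "g = Aux f i j" "length ss = ar f + i + j - 2"
        "valid_cond_args f i j (ss @ u # ts)"
    using pos valid t by (cases g) (auto simp: mu_H_def)
  then have "valid t' \<and> flag_measure ar enum t' = flag_measure ar enum t \<and>
    (proj ar t' = proj ar t \<or> rstep R (proj ar t) (proj ar t')) \<and>
    ((u', u) \<in> S \<longrightarrow> (active_args ar t', active_args ar t) \<in> listrel1 S)"
  proof cases
    case (Orig f)
    with t t' have "t = Fun (Orig f) (ss @ u # ts)" "t' = Fun (Orig f) (ss @ u' # ts)" by simp_all
    with arg_step_Orig[where ar = ar, OF this Orig(2)] valid valid_u' step show ?thesis by auto
  next
    case (Aux f i j)
    with t t' have "t = Fun (Aux f i j) (ss @ u # ts)" "t' = Fun (Aux f i j) (ss @ u' # ts)"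
      by simp_all
    with arg_step_Aux[OF this Aux(3,2)] valid valid_u' step show ?thesis by auto
  qed
  then show "valid t'" "flag_measure ar enum t' = flag_measure ar enum t"
    "proj ar t' = proj ar t \<or> rstep R (proj ar t) (proj ar t')"
    "(u', u) \<in> S \<Longrightarrow> (active_args ar t', active_args ar t) \<in> listrel1 S"
    by blast+
qed

lemma xi_step_valid_proj:
  "xi_step t t' \<Longrightarrow> valid t \<Longrightarrow>
    valid t' \<and> (proj ar t' = proj ar t \<or> rstep R (proj ar t) (proj ar t'))"
proof (induction t arbitrary: t')
  case (Var x)
  from Var.prems(1) show ?case
  proof (cases rule: cs_step_root_or_arg)
    case (root l r \<sigma>)
    then show ?thesis using Var.prems(2) valid_root_step proj_root_step by metis
  qed simp
next
  case (Fun g args)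
  from Fun.prems(1) show ?case
  proof (cases rule: cs_step_root_or_arg)
    case (root l r \<sigma>)
    then show ?thesis using Fun.prems(2) valid_root_step proj_root_step by metis
  next
    case (arg g' ss u u' ts)
    then have "valid u" "u \<in> set args" using Fun.prems(2) by auto
    from Fun.IH[OF \<open>u \<in> set args\<close> arg(4) \<open>valid u\<close>]
    have "valid u'" "proj ar u' = proj ar u \<or> rstep R (proj ar u) (proj ar u')" by auto
    from arg_step(1,3)[OF arg(1,2) Fun.prems(2) arg(3) this] show ?thesis by simp
  qed
qed

lemma xi_step_cases:
  assumes "xi_step t t'" and "valid t"
  shows "valid t'"
    and "rstep R (proj ar t) (proj ar t') \<or> proj ar t' = proj ar t \<and>
      ((flag_measure ar enum t', flag_measure ar enum t) \<in> flag_order \<or>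
       flag_measure ar enum t' = flag_measure ar enum t \<and>
       (active_args ar t', active_args ar t) \<in> listrel1 xi_rel)"
proof -
  show "valid t'" using xi_step_valid_proj[OF assms] ..
  from assms(1) show "rstep R (proj ar t) (proj ar t') \<or> proj ar t' = proj ar t \<and>
      ((flag_measure ar enum t', flag_measure ar enum t) \<in> flag_order \<or>
       flag_measure ar enum t' = flag_measure ar enum t \<and>
       (active_args ar t', active_args ar t) \<in> listrel1 xi_rel)"
  proof (cases rule: cs_step_root_or_arg)
    case (root l r \<sigma>)
    then show ?thesis using proj_root_step assms(2) by blast
  next
    case (arg g ss u u' ts)
    then have "valid u" using assms(2) by simp
    with arg(4) have u': "valid u'"
      and step: "proj ar u' = proj ar u \<or> rstep R (proj ar u) (proj ar u')"
      using xi_step_valid_proj by blast+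
    have "(u', u) \<in> xi_rel" using arg(4) by simp
    with arg_step(2-4)[OF arg(1,2) assms(2) arg(3) u' step] show ?thesis by auto
  qed
qed

lemma valid_cond_args_active_arg:
  assumes "valid_cond_args f i j ts"
  shows "ts ! (ar f + i + j - 2) \<in> set ts"
    and "(proj ar (ts ! (ar f + i + j - 2)), proj ar (Fun (Aux f i j) ts)) \<in> (qd_step R)\<^sup>+"
proof -
  obtain ls r cs \<sigma> pre c post where index: "1 \<le> i" "i \<le> mcount enum f"
    and rule: "enum f ! (i - 1) = (Fun f ls, r, cs)" and j: "1 \<le> j" "j \<le> length cs"
    and pre: "length pre = i - 1" and "length post = mcount enum f - i"
    and ts: "ts =
      map (subst \<sigma> \<circ> emb) ls @ pre @ map (subst \<sigma> \<circ> emb \<circ> snd) (take (j - 1) cs) @ c # post"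
    and conds: "conds_hold R (proj ar \<circ> \<sigma>) cs (j - 1)"
    and last: "(rstep R)\<^sup>*\<^sup>* (subst (proj ar \<circ> \<sigma>) (fst (cs ! (j - 1)))) (proj ar c)"
    and ls: "length ls = ar f" and wf_ls: "\<forall>l\<in>set ls. wf_term ar l"
    using assms by (rule valid_cond_argsE)
  define A where "A = map (subst \<sigma> \<circ> emb) ls @ pre @ map (subst \<sigma> \<circ> emb \<circ> snd) (take (j - 1) cs)"
  have "ts = A @ c # post" "ar f + i + j - 2 = length A"
    using ts ls pre index j by (simp_all add: A_def)
  then have c: "ts ! (ar f + i + j - 2) = c" by simp
  then show "ts ! (ar f + i + j - 2) \<in> set ts" using ts by simp
  have "proj ar (Fun (Aux f i j) ts) = Fun f (map (proj ar \<circ> subst \<sigma> \<circ> emb) ls)" using ts ls by simp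
  also have "\<dots> = subst (proj ar \<circ> \<sigma>) (Fun f ls)" using wf_ls by (simp add: proj_subst proj_emb)
  finally have "sqsup R (proj ar (Fun (Aux f i j) ts)) (subst (proj ar \<circ> \<sigma>) (fst (cs ! (j - 1))))"
    unfolding sqsup_def using enum_nth_rule(1)[OF index rule] j conds
    by (intro exI[of _ Hole] exI[of _ "Fun f ls"] exI[of _ r] exI[of _ cs] exI[of _ "proj ar \<circ> \<sigma>"]
        exI[of _ "j - 1"]) auto
  then have "(subst (proj ar \<circ> \<sigma>) (fst (cs ! (j - 1))), proj ar (Fun (Aux f i j) ts)) \<in> qd_step R"
    by (simp add: qd_step_def)
  with rsteps_qd_step[OF last] c
  show "(proj ar (ts ! (ar f + i + j - 2)), proj ar (Fun (Aux f i j) ts)) \<in> (qd_step R)\<^sup>+"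
    by (simp add: rtrancl_into_trancl1)
qed

lemma active_args_below:
  assumes "valid t" and "a \<in> set (active_args ar t)"
  shows "valid a" and "(proj ar a, proj ar t) \<in> (qd_step R \<union> proper_subterm)\<^sup>+"
proof -
  obtain g ts where t: "t = Fun g ts" using assms(2) by (cases t) auto
  consider (Orig) f where "g = Orig f" | (Aux) f i j where "g = Aux f i j"
    using assms(2) t by (cases g) auto
  then have "valid a \<and> (proj ar a, proj ar t) \<in> (qd_step R \<union> proper_subterm)\<^sup>+"
  proof cases
    case (Orig f)
    with assms(2) t have a: "a \<in> set (take (ar f) ts)" by simp
    then have "valid a" using assms(1) t by (auto dest: in_set_takeD)
    from a obtain A B where AB: "take (ar f) ts = A @ a # B" by (meson split_list)
    have "proj ar t = plug (More f (map (proj ar) A) Hole (map (proj ar) B)) (proj ar a)"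
      using t Orig AB by (simp add: take_map)
    then have "(proj ar a, proj ar t) \<in> qd_step R \<union> proper_subterm"
      unfolding proper_subterm_def by blast
    with \<open>valid a\<close> show ?thesis by blast
  next
    case (Aux f i j)
    with assms t have "valid_cond_args f i j ts" "a = ts ! (ar f + i + j - 2)" "\<forall>t\<in>set ts. valid t"
      by simp_all
    with valid_cond_args_active_arg t Aux show ?thesis
      by (metis (no_types, lifting) Un_upper1 trancl_mono)
  qed
  then show "valid a" and "(proj ar a, proj ar t) \<in> (qd_step R \<union> proper_subterm)\<^sup>+" by simp_all
qed

lemma acc_xi_rel_same_measure:
  assumes args: "active_args ar t \<in> Wellfounded.acc (listrel1 xi_rel)"
    and t: "proj ar t = p" "valid t" "flag_measure ar enum t = m"
    and outer: "\<And>t'. (proj ar t', p) \<in> (qd_step R \<union> proper_subterm)\<^sup>+ \<Longrightarrow> valid t' \<Longrightarrow>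
      t' \<in> Wellfounded.acc xi_rel"
    and smaller: "\<And>t'. (flag_measure ar enum t', m) \<in> flag_order \<Longrightarrow>
      proj ar t' = p \<Longrightarrow> valid t' \<Longrightarrow> t' \<in> Wellfounded.acc xi_rel"
  shows "t \<in> Wellfounded.acc xi_rel"
proof -
  have "\<forall>t. active_args ar t = as \<longrightarrow> proj ar t = p \<longrightarrow> valid t \<longrightarrow> flag_measure ar enum t = m \<longrightarrow>
      t \<in> Wellfounded.acc xi_rel" if "as \<in> Wellfounded.acc (listrel1 xi_rel)" for as
    using that
  proof (induction rule: acc_induct_rule)
    case (1 as)
    show ?case
    proof (intro allI impI)
      fix t assume t: "active_args ar t = as" "proj ar t = p" "valid t" "flag_measure ar enum t = m"
      show "t \<in> Wellfounded.acc xi_rel"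
      proof (rule accI)
        fix t' assume "(t', t) \<in> xi_rel"
        then have step: "xi_step t t'" by simp
        have valid': "valid t'" using xi_step_cases(1)[OF step t(3)] .
        from xi_step_cases(2)[OF step t(3)] consider
          "rstep R (proj ar t) (proj ar t')"
          | "proj ar t' = proj ar t"
            "(flag_measure ar enum t', flag_measure ar enum t) \<in> flag_order"
          | "proj ar t' = proj ar t" "flag_measure ar enum t' = flag_measure ar enum t"
            "(active_args ar t', active_args ar t) \<in> listrel1 xi_rel"
          by blast
        then show "t' \<in> Wellfounded.acc xi_rel"
        proof cases
          case 1
          then have "(proj ar t', p) \<in> (qd_step R \<union> proper_subterm)\<^sup>+"
            using t(2) by (auto simp: qd_step_def)
          then show ?thesis using outer valid' by blast
        next
          case 2
          then show ?thesis using smaller valid' t by simp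
        next
          case 3
          then show ?thesis using "1.IH" valid' t by simp
        qed
      qed
    qed
  qed
  with args t show ?thesis by blast
qed

lemma acc_xi_rel_same_proj:
  assumes outer: "\<And>t'. (proj ar t', p) \<in> (qd_step R \<union> proper_subterm)\<^sup>+ \<Longrightarrow> valid t' \<Longrightarrow>
      t' \<in> Wellfounded.acc xi_rel"
  shows "proj ar t = p \<Longrightarrow> valid t \<Longrightarrow> t \<in> Wellfounded.acc xi_rel"
proof -
  have "\<forall>t. flag_measure ar enum t = m \<longrightarrow> proj ar t = p \<longrightarrow> valid t \<longrightarrow> t \<in> Wellfounded.acc xi_rel" for m
  proof (induction m rule: wf_induct[OF wf_lex_prod[OF wf_less_than wf_less_than]])
    case (1 m)
    show ?case
    proof (intro allI impI)
      fix t assume t: "flag_measure ar enum t = m" "proj ar t = p" "valid t"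
      have "active_args ar t \<in> Wellfounded.acc (listrel1 xi_rel)"
        using active_args_below[OF t(3)] outer t(2) by (intro lists_accD) auto
      from this t(2,3,1) show "t \<in> Wellfounded.acc xi_rel"
        by (rule acc_xi_rel_same_measure) (use outer 1 in blast)+
    qed
  qed
  then show "proj ar t = p \<Longrightarrow> valid t \<Longrightarrow> t \<in> Wellfounded.acc xi_rel" by blast
qed

lemma acc_xi_rel_if_acc_proj:
  "p \<in> Wellfounded.acc ((qd_step R \<union> proper_subterm)\<^sup>+) \<Longrightarrow> proj ar t = p \<Longrightarrow> valid t \<Longrightarrow>
    t \<in> Wellfounded.acc xi_rel"
proof (induction arbitrary: t rule: acc_induct_rule)
  case (1 p)
  have "t' \<in> Wellfounded.acc xi_rel"
    if "(proj ar t', p) \<in> (qd_step R \<union> proper_subterm)\<^sup>+" "valid t'" for t'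
    using 1 that by blast
  then show ?case by (rule acc_xi_rel_same_proj[OF _ 1(3,4)])
qed

lemma terminating_if_quasi_decreasing:
  assumes "quasi_decreasing ar R"
  shows "terminating_on xi_step {zeta enum s | s. wf_gterm ar R s}"
  unfolding terminating_on_iff_acc
proof
  fix t assume "t \<in> {zeta enum s | s. wf_gterm ar R s}"
  then obtain s where t: "t = zeta enum s" and s: "wf_gterm ar R s" by blast
  have qd: "proj ar t \<in> Wellfounded.acc (qd_step R)"
    using assms wf_term_proj_zeta[OF s] t
    unfolding quasi_decreasing_def quasi_decreasing_term_iff_acc by blast
  have "proj ar t \<in> Wellfounded.acc (qd_step R \<union> proper_subterm)"
    using acc_qd_step_proper_subterm[OF qd, of Hole] by simp
  then have "proj ar t \<in> Wellfounded.acc ((qd_step R \<union> proper_subterm)\<^sup>+)"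
    by (rule acc_trancl)
  then show "t \<in> Wellfounded.acc xi_rel"
    using acc_xi_rel_if_acc_proj valid_no_aux[OF no_aux_zeta] t by blast
qed

end

theorem corollary5:
  fixes ar :: "'f \<Rightarrow> nat"
    and R :: "('f, 'v) crule set"
    and enum :: "'f \<Rightarrow> ('f, 'v) crule list"
  assumes "infinite (UNIV :: 'v set)"
    and "strong_cctrs ar R"
    and "enumeration R enum"
  shows "quasi_decreasing ar R \<longleftrightarrow>
    terminating_on (cs_step (mu_H ar) (Xi ar R enum))
      {zeta enum s | s. wf_gterm ar R s}"
proof -
  interpret transformed_cctrs ar R enum using assms by unfold_locales
  show ?thesis using quasi_decreasing_if_terminating terminating_if_quasi_decreasing by blast
qed

end
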